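(* Let $q\ge7$ be a prime power and $p$ an odd prime, let $E/\mathbb{F}_q$ be an elliptic curve with $E(\mathbb{F}_q)\cong\mathbb{Z}_p\oplus\mathbb{Z}_p$, $\mathcal{P}=E(\mathbb{F}_q)$, let $Q\in E(\mathbb{F}_{q^2})\setminus E(\mathbb{F}_q)$ satisfy $Q\oplus\phi(Q)=\infty$, let $k$ be an integer with $p\mid k$ and $0<k<p^2/2$, and let $D=k(Q+\phi(Q))$. Then the NMDS code $\mathcal{C}(E,\mathcal{P},D)$, with parameters $[p^2,2k,p^2-2k]$, satisfies $A_w>0$ for every $w$ with $p^2-2k\le w\le p^2$.
   Context: $A_w$ is the number of codewords of Hamming weight $w$. Elliptic curve $E/\mathbb{F}_q$: nonsingular Weierstrass curve with point at infinity $\infty$ as identity of the group law $\oplus$; $\phi$ is the $q$-Frobenius $(x,y)\mapsto(x^q,y^q)$. For $\mathcal{P}=\{P_1,\dots,P_n\}\subseteq E(\mathbb{F}_q)$ and a Galois-invariant divisor $D$ with support disjoint from $\mathcal{P}$ and $0<\deg D<n$, $\mathcal{C}(E,\mathcal{P},D)=\{(f(P_1),\dots,f(P_n)):f\in\mathscr{L}(D)\}$ where $\mathscr{L}(D)=\{f\in\mathbb{F}_q(E)^\times:\operatorname{div}(f)\ge-D\}\cup\{0\}$. *)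

theory Defs
  imports "HOL-Algebra.Elementary_Groups" "HOL-Computational_Algebra.Polynomial"
    "HOL-Library.Extended_Nat"
begin

text \<open>A bivariate polynomial g(x,y) is represented as a polynomial in y whose
coefficients are polynomials in x.\<close>

type_synonym 'k bipoly = "'k poly poly"

definition eval2 :: "'k::comm_ring_1 bipoly \<Rightarrow> 'k \<Rightarrow> 'k \<Rightarrow> 'k" where
  "eval2 g a b = poly (map_poly (\<lambda>c. poly c a) g) b"

definition varX :: "'k::comm_ring_1 bipoly" where "varX = [:[:0, 1:]:]"
definition varY :: "'k::comm_ring_1 bipoly" where "varY = [:0, 1:]"
definition cst :: "'k::comm_ring_1 \<Rightarrow> 'k bipoly" where "cst c = [:[:c:]:]"

definition coeffs_in :: "'k::comm_ring_1 set \<Rightarrow> 'k bipoly \<Rightarrow> bool" where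
  "coeffs_in F g \<longleftrightarrow> (\<forall>i j. coeff (coeff g j) i \<in> F)"

text \<open>g lies in m_P^n O_P, where O_P is the local ring of the curve F = 0 at
P = (a,b): there is h with h(P) \<noteq> 0 such that h*g \<in> (x-a, y-b)^n + (F).\<close>

definition in_mpow :: "'k::field bipoly \<Rightarrow> 'k \<Rightarrow> 'k \<Rightarrow> nat \<Rightarrow> 'k bipoly \<Rightarrow> bool" where
  "in_mpow F a b n g \<longleftrightarrow>
     (\<exists>h v u. eval2 h a b \<noteq> 0 \<and>
        h * g = v * F + (\<Sum>i\<le>n. u i * (varX - cst a) ^ i * (varY - cst b) ^ (n - i)))"

definition ordp :: "'k::field bipoly \<Rightarrow> 'k \<Rightarrow> 'k \<Rightarrow> 'k bipoly \<Rightarrow> enat" where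
  "ordp F a b g = Sup {enat n | n. in_mpow F a b n g}"

record 'k weier =
  wa1 :: 'k  wa2 :: 'k  wa3 :: 'k  wa4 :: 'k  wa6 :: 'k

datatype 'k ecpt = Inf | Pt 'k 'k

definition on_curve :: "'k::field weier \<Rightarrow> 'k \<Rightarrow> 'k \<Rightarrow> bool" where
  "on_curve E x y \<longleftrightarrow>
     y^2 + wa1 E * x * y + wa3 E * y = x^3 + wa2 E * x^2 + wa4 E * x + wa6 E"

text \<open>Nonsingularity (the point at infinity of a Weierstrass curve is always smooth):
no affine point of the curve where both partial derivatives vanish.\<close>
definition nonsingular :: "'k::field weier \<Rightarrow> bool" where
  "nonsingular E \<longleftrightarrow> (\<forall>x y. on_curve E x y \<longrightarrow>
     \<not> (wa1 E * y - 3 * x^2 - 2 * wa2 E * x - wa4 E = 0 \<and> 2 * y + wa1 E * x + wa3 E = 0))"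

definition points :: "'k::field weier \<Rightarrow> 'k set \<Rightarrow> 'k ecpt set" where
  "points E K = insert Inf {Pt x y | x y. x \<in> K \<and> y \<in> K \<and> on_curve E x y}"

definition eneg :: "'k::field weier \<Rightarrow> 'k ecpt \<Rightarrow> 'k ecpt" where
  "eneg E P = (case P of Inf \<Rightarrow> Inf | Pt x y \<Rightarrow> Pt x (- y - wa1 E * x - wa3 E))"

definition eadd :: "'k::field weier \<Rightarrow> 'k ecpt \<Rightarrow> 'k ecpt \<Rightarrow> 'k ecpt" where
  "eadd E P1 P2 = (case P1 of Inf \<Rightarrow> P2 | Pt x1 y1 \<Rightarrow> (case P2 of Inf \<Rightarrow> P1 | Pt x2 y2 \<Rightarrow>
     (if x1 = x2 \<and> y1 + y2 + wa1 E * x2 + wa3 E = 0 then Inf else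
      let (l, nu) =
        (if x1 = x2 then
           ((3 * x1^2 + 2 * wa2 E * x1 + wa4 E - wa1 E * y1) / (2 * y1 + wa1 E * x1 + wa3 E),
            (wa4 E * x1 + 2 * wa6 E - wa3 E * y1 - x1^3) / (2 * y1 + wa1 E * x1 + wa3 E))
         else ((y2 - y1) / (x2 - x1), (y1 * x2 - y2 * x1) / (x2 - x1)));
          x3 = l^2 + wa1 E * l - wa2 E - x1 - x2
      in Pt x3 (- (l + wa1 E) * x3 - nu - wa3 E))))"

definition frob :: "nat \<Rightarrow> 'k::field ecpt \<Rightarrow> 'k ecpt" where
  "frob q P = (case P of Inf \<Rightarrow> Inf | Pt x y \<Rightarrow> Pt (x ^ q) (y ^ q))"

definition egroup :: "'k::field weier \<Rightarrow> 'k set \<Rightarrow> 'k ecpt monoid" where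
  "egroup E K = \<lparr>carrier = points E K, monoid.mult = eadd E, one = Inf\<rparr>"

definition wpoly :: "'k::field weier \<Rightarrow> 'k bipoly" where
  "wpoly E = varY^2 + cst (wa1 E) * varX * varY + cst (wa3 E) * varY
             - varX^3 - cst (wa2 E) * varX^2 - cst (wa4 E) * varX - cst (wa6 E)"

text \<open>Chart at infinity: u = x/y, w = 1/y (u plays the role of varX, w of varY);
the point at infinity is (u,w) = (0,0).\<close>
definition wpoly_inf :: "'k::field weier \<Rightarrow> 'k bipoly" where
  "wpoly_inf E = varY + cst (wa1 E) * varX * varY + cst (wa3 E) * varY^2
             - varX^3 - cst (wa2 E) * varX^2 * varY - cst (wa4 E) * varX * varY^2
             - cst (wa6 E) * varY^3"

text \<open>An upper bound d on the total degree of g.\<close>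
definition tdeg :: "'k::zero bipoly \<Rightarrow> nat" where
  "tdeg g = degree g + (MAX j \<in> {..degree g}. degree (coeff g j))"

text \<open>Homogenisation: g(x,y) = G(u,w) / w^d with d = tdeg g.\<close>
definition homog :: "'k::comm_ring_1 bipoly \<Rightarrow> 'k bipoly" where
  "homog g = (\<Sum>j\<le>degree g. \<Sum>i\<le>degree (coeff g j).
                 monom (monom (coeff (coeff g j) i) i) (tdeg g - i - j))"

definition ord_poly :: "'k::field weier \<Rightarrow> 'k ecpt \<Rightarrow> 'k bipoly \<Rightarrow> int" where
  "ord_poly E P g = (case P of
      Pt a b \<Rightarrow> int (the_enat (ordp (wpoly E) a b g))
    | Inf \<Rightarrow> int (the_enat (ordp (wpoly_inf E) 0 0 (homog g)))
             - int (tdeg g) * int (the_enat (ordp (wpoly_inf E) 0 0 varY)))"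

text \<open>A rational function f = g/h (h not vanishing identically on E) is nonzero iff
W does not divide g; its order at P is ord_P(g) - ord_P(h).\<close>
definition ord_fun :: "'k::field weier \<Rightarrow> 'k ecpt \<Rightarrow> 'k bipoly \<Rightarrow> 'k bipoly \<Rightarrow> int" where
  "ord_fun E P g h = ord_poly E P g - ord_poly E P h"

text \<open>Representatives (g,h) of elements of F_q(E) (coefficients in K = F_q).\<close>
definition ratfun :: "'k::field weier \<Rightarrow> 'k set \<Rightarrow> 'k bipoly \<Rightarrow> 'k bipoly \<Rightarrow> bool" where
  "ratfun E K g h \<longleftrightarrow> coeffs_in K g \<and> coeffs_in K h \<and> \<not> wpoly E dvd h"

text \<open>Membership in L(D): f = 0, or div(f) \<ge> -D at every point of E over the
(algebraically closed) ambient field.\<close>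
definition in_LD :: "'k::field weier \<Rightarrow> 'k set \<Rightarrow> ('k ecpt \<Rightarrow> int) \<Rightarrow> 'k bipoly \<Rightarrow> 'k bipoly \<Rightarrow> bool" where
  "in_LD E K D g h \<longleftrightarrow> ratfun E K g h \<and>
     (wpoly E dvd g \<or> (\<forall>P \<in> points E UNIV. ord_fun E P g h \<ge> - D P))"

text \<open>Value f(P) at a point where f is regular: the unique c with
f - c = 0 or ord_P(f - c) > 0.\<close>
definition fval :: "'k::field weier \<Rightarrow> 'k ecpt \<Rightarrow> 'k bipoly \<Rightarrow> 'k bipoly \<Rightarrow> 'k" where
  "fval E P g h = (THE c. wpoly E dvd (g - cst c * h) \<or>
                          ord_poly E P (g - cst c * h) > ord_poly E P h)"

text \<open>The AG code C(E,P,D); a codeword is a vector indexed by the points of P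
(set to 0 outside P).\<close>
definition ag_code :: "'k::field weier \<Rightarrow> 'k set \<Rightarrow> 'k ecpt set \<Rightarrow> ('k ecpt \<Rightarrow> int) \<Rightarrow> ('k ecpt \<Rightarrow> 'k) set" where
  "ag_code E K PP D = {c. \<exists>g h. in_LD E K D g h \<and>
      c = (\<lambda>P. if P \<in> PP then fval E P g h else 0)}"

definition hweight :: "'k ecpt set \<Rightarrow> ('k ecpt \<Rightarrow> 'k::zero) \<Rightarrow> nat" where
  "hweight PP c = card {P \<in> PP. c P \<noteq> 0}"

definition weight_count :: "('k ecpt \<Rightarrow> 'k::zero) set \<Rightarrow> 'k ecpt set \<Rightarrow> nat \<Rightarrow> nat" where
  "weight_count C PP w = card {c \<in> C. hweight PP c = w}"

definition alg_closed_type :: "'k::field itself \<Rightarrow> bool" where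
  "alg_closed_type _ \<longleftrightarrow> (\<forall>f :: 'k poly. degree f > 0 \<longrightarrow> (\<exists>x. poly f x = 0))"

end

theory Submission
  imports Defs "HOL-Computational_Algebra.Formal_Laurent_Series"
begin

(* Write j <= 2k as j = m + n with m = floor(j/2) and n = ceil(j/2) <= k.  Since E(F_q) = Z_p x Z_p has
   no point of order 2 (p odd), the affine points of E(F_q) come in pairs (a, b), (a, b') with b ~= b'.
   Choose a set A of m such x-coordinates and take f = prod_{a in A} (x - a) / (x - x(Q))^n.  As
   phi(Q) = -Q, both Q and phi(Q) lie over x(Q) in F_q, so f has poles of order n <= k at Q and phi(Q);
   at infinity ord f = 2n - 2m >= 0.  Hence f lies in L(D), and it vanishes on P exactly at the 2m
   points over A and, when n = m + 1, at infinity: its codeword has weight p^2 - j.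

   Orders and values at a point are computed by expanding along a local branch x = a + t, y = b + z(t)
   (in the chart x/y, 1/y at infinity) in Laurent series, z being found by Hensel lifting.  The same
   expansions show that all codewords are F_q-valued, so the code is finite and A_w is a genuine count. *)

unbundle fps_syntax

lemma map_poly_add_hom:
  assumes "f 0 = 0" "\<And>a b. f (a + b) = f a + f b"
  shows "map_poly f (p + q) = map_poly f p + map_poly f q"
  by (rule poly_eqI) (simp add: coeff_map_poly assms)

lemma map_poly_mult_hom:
  fixes f :: "'a::comm_semiring_1 \<Rightarrow> 'b::comm_semiring_1"
  assumes "f 0 = 0" "\<And>a b. f (a + b) = f a + f b" "\<And>a b. f (a * b) = f a * f b"
  shows "map_poly f (p * q) = map_poly f p * map_poly f q"
  by (rule poly_eqI)
    (simp add: coeff_map_poly coeff_mult assms sum_comp_morphism[of f, symmetric, OF assms(1,2)] o_def)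

definition poly_fls :: "'k::field poly \<Rightarrow> 'k fls \<Rightarrow> 'k fls" where
  "poly_fls c x = poly (map_poly fls_const c) x"

definition eval2_fls :: "'k::field bipoly \<Rightarrow> 'k fls \<Rightarrow> 'k fls \<Rightarrow> 'k fls" where
  "eval2_fls G x y = poly (map_poly (\<lambda>c. poly_fls c x) G) y"

lemma poly_fls_add [simp]: "poly_fls (p + q) x = poly_fls p x + poly_fls q x"
  unfolding poly_fls_def by (subst map_poly_add_hom) (auto simp: fls_plus_const[symmetric])

lemma poly_fls_mult [simp]: "poly_fls (p * q) x = poly_fls p x * poly_fls q x"
  unfolding poly_fls_def by (subst map_poly_mult_hom) (auto simp: fls_plus_const[symmetric])

lemma poly_fls_0 [simp]: "poly_fls 0 x = 0"
  by (simp add: poly_fls_def)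

lemma poly_fls_minus [simp]: "poly_fls (- p) x = - poly_fls p x"
  using poly_fls_add[of "- p" p x] by (simp add: eq_neg_iff_add_eq_0)

lemma poly_fls_diff [simp]: "poly_fls (p - q) x = poly_fls p x - poly_fls q x"
  using poly_fls_add[of p "- q" x] by simp

lemma poly_fls_pCons [simp]: "poly_fls (pCons c p) x = fls_const c + x * poly_fls p x"
  by (simp add: poly_fls_def map_poly_pCons)

lemma poly_fls_1 [simp]: "poly_fls 1 x = 1"
  by (simp add: one_pCons)

lemma poly_fls_power [simp]: "poly_fls (p ^ n) x = poly_fls p x ^ n"
  by (induction n) auto

lemma poly_fls_sum: "poly_fls (sum f A) x = (\<Sum>a\<in>A. poly_fls (f a) x)"
  by (induction A rule: infinite_finite_induct) auto

lemma poly_fls_monom: "poly_fls (monom c i) x = fls_const c * x ^ i"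
  by (simp add: poly_fls_def map_poly_monom poly_monom)

lemma poly_fls_conv_sum: "poly_fls p x = (\<Sum>i\<le>degree p. fls_const (coeff p i) * x ^ i)"
  by (subst poly_as_sum_of_monoms[symmetric]) (simp add: poly_fls_sum poly_fls_monom)

lemma eval2_fls_add [simp]: "eval2_fls (G + H) x y = eval2_fls G x y + eval2_fls H x y"
  unfolding eval2_fls_def by (subst map_poly_add_hom) auto

lemma eval2_fls_mult [simp]: "eval2_fls (G * H) x y = eval2_fls G x y * eval2_fls H x y"
  unfolding eval2_fls_def by (subst map_poly_mult_hom) auto

lemma eval2_fls_0 [simp]: "eval2_fls 0 x y = 0"
  by (simp add: eval2_fls_def)

lemma eval2_fls_minus [simp]: "eval2_fls (- G) x y = - eval2_fls G x y"
  using eval2_fls_add[of "- G" G x y] by (simp add: eq_neg_iff_add_eq_0)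

lemma eval2_fls_diff [simp]: "eval2_fls (G - H) x y = eval2_fls G x y - eval2_fls H x y"
  using eval2_fls_add[of G "- H" x y] by simp

lemma eval2_fls_pCons [simp]: "eval2_fls (pCons c G) x y = poly_fls c x + y * eval2_fls G x y"
  by (simp add: eval2_fls_def map_poly_pCons)

lemma eval2_fls_1 [simp]: "eval2_fls 1 x y = 1"
  by (simp add: one_pCons)

lemma eval2_fls_power [simp]: "eval2_fls (G ^ n) x y = eval2_fls G x y ^ n"
  by (induction n) auto

lemma eval2_fls_sum: "eval2_fls (sum f A) x y = (\<Sum>a\<in>A. eval2_fls (f a) x y)"
  by (induction A rule: infinite_finite_induct) auto

lemma eval2_fls_cst [simp]: "eval2_fls (cst c) x y = fls_const c"
  by (simp add: cst_def)

lemma eval2_fls_varX [simp]: "eval2_fls varX x y = x"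
  by (simp add: varX_def)

lemma eval2_fls_varY [simp]: "eval2_fls varY x y = y"
  by (simp add: varY_def)

lemma eval2_fls_monom: "eval2_fls (monom c j) x y = poly_fls c x * y ^ j"
  by (simp add: eval2_fls_def map_poly_monom poly_monom)

lemma eval2_fls_monom_monom: "eval2_fls (monom (monom c i) j) x y = fls_const c * x ^ i * y ^ j"
  by (simp add: eval2_fls_monom poly_fls_monom)

lemma eval2_fls_conv_sum: "eval2_fls G x y = (\<Sum>j\<le>degree G. poly_fls (coeff G j) x * y ^ j)"
  by (subst poly_as_sum_of_monoms[symmetric]) (simp add: eval2_fls_sum eval2_fls_monom)

lemma eval2_pCons [simp]: "eval2 (pCons c G) a b = poly c a + b * eval2 G a b"
  by (simp add: eval2_def map_poly_pCons)

lemma eval2_0 [simp]: "eval2 0 a b = 0"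
  by (simp add: eval2_def)

lemma eval2_conv_poly_poly: "eval2 G a b = poly (poly G [:b:]) a"
  by (induction G) auto

lemma eval2_add [simp]: "eval2 (G + H) a b = eval2 G a b + eval2 H a b"
  and eval2_mult [simp]: "eval2 (G * H) a b = eval2 G a b * eval2 H a b"
  and eval2_diff [simp]: "eval2 (G - H) a b = eval2 G a b - eval2 H a b"
  and eval2_power [simp]: "eval2 (G ^ n) a b = eval2 G a b ^ n"
  and eval2_1 [simp]: "eval2 1 a b = 1"
  and eval2_cst [simp]: "eval2 (cst c) a b = c"
  and eval2_varX [simp]: "eval2 varX a b = a"
  and eval2_varY [simp]: "eval2 varY a b = b"
  by (simp_all add: eval2_conv_poly_poly cst_def varX_def varY_def)

lemma eval2_sum: "eval2 (sum f A) a b = (\<Sum>x\<in>A. eval2 (f x) a b)"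
  by (induction A rule: infinite_finite_induct) auto

lemma cst_add: "cst (x + y) = cst x + cst y"
  and cst_mult: "cst (x * y) = cst x * cst y"
  and cst_diff: "cst (x - y) = cst x - cst y"
  and cst_0 [simp]: "cst 0 = 0"
  and cst_1 [simp]: "cst 1 = 1"
  by (simp_all add: cst_def one_pCons)

lemma cst_power: "cst (x ^ n) = cst x ^ n"
  by (induction n) (simp_all add: cst_mult)

lemma bipoly_decompose_at:
  fixes G :: "'k::field bipoly"
  obtains C D where "G = cst (eval2 G a b) + (varX - cst a) * C + (varY - cst b) * D"
proof -
  define G' where "G' = poly G [:b:]"
  have "poly (G - [:G':]) [:b:] = 0" by (simp add: G'_def)
  then obtain D where D: "G - [:G':] = [:- [:b:], 1:] * D"
    by (metis dvdE poly_eq_0_iff_dvd)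
  have "poly (G' - [:poly G' a:]) a = 0" by simp
  then obtain C where C: "G' - [:poly G' a:] = [:- a, 1:] * C"
    by (metis dvdE poly_eq_0_iff_dvd)
  have "G = [:[:poly G' a:] + [:- a, 1:] * C:] + [:- [:b:], 1:] * D"
    using C D by (simp add: algebra_simps)
  also have "\<dots> = cst (eval2 G a b) + (varX - cst a) * [:C:] + (varY - cst b) * D"
    by (simp add: eval2_conv_poly_poly G'_def cst_def varX_def varY_def)
  finally show ?thesis by (rule that)
qed


definition ord_ge :: "int \<Rightarrow> 'k::field fls \<Rightarrow> bool" where
  "ord_ge n f \<longleftrightarrow> (\<forall>i<n. f $$ i = 0)"

abbreviation fls_regular :: "'k::field fls \<Rightarrow> bool" where
  "fls_regular f \<equiv> ord_ge 0 f"

abbreviation local_x :: "'k::field \<Rightarrow> 'k fls" where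
  "local_x a \<equiv> fls_const a + fls_X"

lemma ord_ge_iff: "ord_ge n f \<longleftrightarrow> f = 0 \<or> n \<le> fls_subdegree f"
  unfolding ord_ge_def
  by (metis fls_eq0_below_subdegree fls_subdegree_geI fls_zero_nth leD order_less_le_trans linorder_not_le)

lemma ord_ge_0 [simp]: "ord_ge n 0"
  and ord_ge_const [simp]: "ord_ge 0 (fls_const c)"
  and ord_ge_1 [simp]: "ord_ge 0 1"
  and ord_ge_X [simp]: "ord_ge 1 fls_X"
  by (simp_all add: ord_ge_def)

lemma ord_ge_mono: "m \<le> n \<Longrightarrow> ord_ge n f \<Longrightarrow> ord_ge m f"
  by (auto simp: ord_ge_def)

lemma ord_ge_add: "ord_ge n f \<Longrightarrow> ord_ge n g \<Longrightarrow> ord_ge n (f + g)"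
  and ord_ge_minus: "ord_ge n f \<Longrightarrow> ord_ge n (- f)"
  and ord_ge_diff: "ord_ge n f \<Longrightarrow> ord_ge n g \<Longrightarrow> ord_ge n (f - g)"
  by (auto simp: ord_ge_def)

lemma ord_ge_mult: "ord_ge n f \<Longrightarrow> ord_ge m g \<Longrightarrow> ord_ge (n + m) (f * g)"
  unfolding ord_ge_iff by (cases "f = 0"; cases "g = 0") (auto simp: fls_subdegree_mult)

lemma ord_ge_mult_le: "ord_ge n f \<Longrightarrow> ord_ge m g \<Longrightarrow> k \<le> n + m \<Longrightarrow> ord_ge k (f * g)"
  using ord_ge_mono ord_ge_mult by blast

lemma ord_ge_power: "ord_ge n f \<Longrightarrow> ord_ge (int k * n) (f ^ k)"
proof (induction k)
  case (Suc k)
  then have "ord_ge (n + int k * n) (f * f ^ k)" using ord_ge_mult by blast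
  then show ?case by (simp add: algebra_simps)
qed simp

lemma ord_ge_sum: "(\<And>a. a \<in> A \<Longrightarrow> ord_ge n (f a)) \<Longrightarrow> ord_ge n (sum f A)"
  by (induction A rule: infinite_finite_induct) (auto intro: ord_ge_add)

lemma ord_ge_all_imp_zero:
  assumes "\<And>n::nat. ord_ge (int n) f"
  shows "f = 0"
proof (rule ccontr)
  assume "f \<noteq> 0"
  moreover have "ord_ge (fls_subdegree f + 1) f"
    by (rule ord_ge_mono[OF _ assms[of "nat (fls_subdegree f + 1)"]]) simp
  ultimately show False by (simp add: ord_ge_iff)
qed

lemma ord_ge_1_iff: "ord_ge 1 f \<longleftrightarrow> fls_regular f \<and> f $$ 0 = 0"
  by (auto simp: ord_ge_def) (metis int_one_le_iff_zero_less linorder_not_le order_le_less)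

lemma ord_ge_1_imp_regular: "ord_ge 1 f \<Longrightarrow> fls_regular f"
  by (simp add: ord_ge_1_iff)

lemma fls_regular_local_x: "fls_regular (local_x a)"
  by (simp add: ord_ge_add ord_ge_mono[of 0 1])

lemma fls_regular_const_add: "ord_ge 1 z \<Longrightarrow> fls_regular (fls_const b + z)"
  by (simp add: ord_ge_add ord_ge_1_imp_regular)

lemma fls_regular_const_mult: "fls_regular f \<Longrightarrow> fls_regular (fls_const c * f)"
  using ord_ge_mult[OF ord_ge_const] by fastforce

lemma fls_regular_nth_0_mult:
  assumes "fls_regular f" "fls_regular g"
  shows "(f * g) $$ 0 = f $$ 0 * g $$ 0"
proof -
  have f: "f = fps_to_fls (fls_regpart f)" and g: "g = fps_to_fls (fls_regpart g)"
    using assms by (auto simp: ord_ge_iff)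
  have "(f * g) $$ 0 = fps_to_fls (fls_regpart f * fls_regpart g) $$ 0"
    by (subst f, subst g, subst fls_times_fps_to_fls) simp
  then show ?thesis by simp
qed

lemma fls_regular_unit_subdegree:
  "fls_regular f \<Longrightarrow> f $$ 0 \<noteq> 0 \<Longrightarrow> fls_subdegree f = 0"
  by (metis fls_subdegree_eqI ord_ge_def)

lemma fls_regular_poly_fls: "fls_regular x \<Longrightarrow> fls_regular (poly_fls p x)"
  by (induction p) (auto intro!: ord_ge_add ord_ge_mult_le[where n=0 and m=0])

lemma fls_regular_eval2_fls: "fls_regular x \<Longrightarrow> fls_regular y \<Longrightarrow> fls_regular (eval2_fls G x y)"
  by (induction G) (auto intro!: ord_ge_add ord_ge_mult_le[where n=0 and m=0] fls_regular_poly_fls)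

lemma poly_fls_nth_0: "fls_regular x \<Longrightarrow> poly_fls p x $$ 0 = poly p (x $$ 0)"
  by (induction p) (auto simp: fls_regular_nth_0_mult fls_regular_poly_fls)

lemma eval2_fls_nth_0:
  "fls_regular x \<Longrightarrow> fls_regular y \<Longrightarrow> eval2_fls G x y $$ 0 = eval2 G (x $$ 0) (y $$ 0)"
  by (induction G) (auto simp: fls_regular_nth_0_mult fls_regular_eval2_fls fls_regular_poly_fls poly_fls_nth_0)

lemma eval2_fls_local_nth_0:
  "ord_ge 1 z \<Longrightarrow> eval2_fls G (local_x a) (fls_const b + z) $$ 0 = eval2 G a b"
  by (simp add: eval2_fls_nth_0 fls_regular_local_x fls_regular_const_add) (simp add: ord_ge_1_iff)

lemma eval2_fls_diff_factor:
  assumes "fls_regular x" "fls_regular y1" "fls_regular y2"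
  obtains r where "fls_regular r" "eval2_fls G x y1 - eval2_fls G x y2 = (y1 - y2) * r"
proof -
  have "\<exists>r. fls_regular r \<and> eval2_fls G x y1 - eval2_fls G x y2 = (y1 - y2) * r"
  proof (induction G)
    case 0
    show ?case by (intro exI[of _ 0]) simp
  next
    case (pCons c G)
    then obtain r where r: "fls_regular r" "eval2_fls G x y1 - eval2_fls G x y2 = (y1 - y2) * r"
      by blast
    have "eval2_fls (pCons c G) x y1 - eval2_fls (pCons c G) x y2
        = (y1 - y2) * eval2_fls G x y1 + y2 * (eval2_fls G x y1 - eval2_fls G x y2)"
      by (simp add: algebra_simps)
    also have "\<dots> = (y1 - y2) * (eval2_fls G x y1 + y2 * r)"
      by (simp only: r(2)) (simp add: algebra_simps)
    finally show ?case
      using assms r(1) by (intro exI[of _ "eval2_fls G x y1 + y2 * r"])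
        (auto intro!: ord_ge_add ord_ge_mult_le[where n=0 and m=0] fls_regular_eval2_fls)
  qed
  then show ?thesis using that by blast
qed


definition field_closed :: "'k::field set \<Rightarrow> bool" where
  "field_closed K \<longleftrightarrow> 0 \<in> K \<and> 1 \<in> K \<and> (\<forall>x\<in>K. \<forall>y\<in>K. x + y \<in> K \<and> x * y \<in> K) \<and>
     (\<forall>x\<in>K. - x \<in> K \<and> inverse x \<in> K)"

lemma field_closed_UNIV: "field_closed UNIV"
  by (simp add: field_closed_def)

lemma field_closedD:
  assumes "field_closed K"
  shows "0 \<in> K" "1 \<in> K" "x \<in> K \<Longrightarrow> y \<in> K \<Longrightarrow> x + y \<in> K" "x \<in> K \<Longrightarrow> y \<in> K \<Longrightarrow> x * y \<in> K"
    "x \<in> K \<Longrightarrow> - x \<in> K" "x \<in> K \<Longrightarrow> y \<in> K \<Longrightarrow> x - y \<in> K" "x \<in> K \<Longrightarrow> y \<in> K \<Longrightarrow> x / y \<in> K"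
  using assms unfolding field_closed_def diff_conv_add_uminus divide_inverse by blast+

lemma field_closed_sum: "field_closed K \<Longrightarrow> (\<And>a. a \<in> A \<Longrightarrow> f a \<in> K) \<Longrightarrow> sum f A \<in> K"
  by (induction A rule: infinite_finite_induct) (auto simp: field_closedD)

definition poly_coeffs_in :: "'k::field set \<Rightarrow> 'k poly \<Rightarrow> bool" where
  "poly_coeffs_in K p \<longleftrightarrow> (\<forall>i. coeff p i \<in> K)"

lemma poly_coeffs_in_add: "field_closed K \<Longrightarrow> poly_coeffs_in K p \<Longrightarrow> poly_coeffs_in K q \<Longrightarrow> poly_coeffs_in K (p + q)"
  and poly_coeffs_in_diff: "field_closed K \<Longrightarrow> poly_coeffs_in K p \<Longrightarrow> poly_coeffs_in K q \<Longrightarrow> poly_coeffs_in K (p - q)"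
  and poly_coeffs_in_0: "field_closed K \<Longrightarrow> poly_coeffs_in K 0"
  and poly_coeffs_in_pCons: "c \<in> K \<Longrightarrow> poly_coeffs_in K p \<Longrightarrow> poly_coeffs_in K (pCons c p)"
  by (auto simp: poly_coeffs_in_def field_closedD coeff_pCons split: nat.split)

lemma poly_coeffs_in_mult: "field_closed K \<Longrightarrow> poly_coeffs_in K p \<Longrightarrow> poly_coeffs_in K q \<Longrightarrow> poly_coeffs_in K (p * q)"
  unfolding poly_coeffs_in_def coeff_mult by (auto intro!: field_closed_sum field_closedD(4))

lemma poly_coeffs_in_1: "field_closed K \<Longrightarrow> poly_coeffs_in K 1"
  by (simp add: one_pCons poly_coeffs_in_pCons poly_coeffs_in_0 field_closedD)

lemma poly_coeffs_in_linear: "field_closed K \<Longrightarrow> a \<in> K \<Longrightarrow> poly_coeffs_in K [:- a, 1:]"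
  by (simp add: poly_coeffs_in_pCons poly_coeffs_in_0 field_closedD)

lemma poly_coeffs_in_power: "field_closed K \<Longrightarrow> poly_coeffs_in K p \<Longrightarrow> poly_coeffs_in K (p ^ n)"
  by (induction n) (auto intro: poly_coeffs_in_mult poly_coeffs_in_1)

lemma poly_coeffs_in_prod: "field_closed K \<Longrightarrow> (\<And>a. a \<in> A \<Longrightarrow> poly_coeffs_in K (f a)) \<Longrightarrow> poly_coeffs_in K (prod f A)"
  by (induction A rule: infinite_finite_induct) (auto intro: poly_coeffs_in_mult poly_coeffs_in_1)

lemma poly_coeffs_in_sum: "field_closed K \<Longrightarrow> (\<And>a. a \<in> A \<Longrightarrow> poly_coeffs_in K (f a)) \<Longrightarrow> poly_coeffs_in K (sum f A)"
  by (induction A rule: infinite_finite_induct) (auto intro: poly_coeffs_in_add poly_coeffs_in_0)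

lemma coeffs_in_iff: "coeffs_in K G \<longleftrightarrow> (\<forall>j. poly_coeffs_in K (coeff G j))"
  unfolding coeffs_in_def poly_coeffs_in_def by blast

lemma coeffs_in_add: "field_closed K \<Longrightarrow> coeffs_in K G \<Longrightarrow> coeffs_in K H \<Longrightarrow> coeffs_in K (G + H)"
  and coeffs_in_diff: "field_closed K \<Longrightarrow> coeffs_in K G \<Longrightarrow> coeffs_in K H \<Longrightarrow> coeffs_in K (G - H)"
  by (simp_all add: coeffs_in_iff poly_coeffs_in_add poly_coeffs_in_diff)

lemma coeffs_in_mult: "field_closed K \<Longrightarrow> coeffs_in K G \<Longrightarrow> coeffs_in K H \<Longrightarrow> coeffs_in K (G * H)"
  unfolding coeffs_in_iff coeff_mult by (auto intro!: poly_coeffs_in_sum poly_coeffs_in_mult)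

lemma coeffs_in_const: "field_closed K \<Longrightarrow> poly_coeffs_in K p \<Longrightarrow> coeffs_in K [:p:]"
  by (simp add: coeffs_in_iff coeff_pCons poly_coeffs_in_0 split: nat.split)

lemma coeffs_in_cst: "field_closed K \<Longrightarrow> c \<in> K \<Longrightarrow> coeffs_in K (cst c)"
  and coeffs_in_varX: "field_closed K \<Longrightarrow> coeffs_in K varX"
  and coeffs_in_varY: "field_closed K \<Longrightarrow> coeffs_in K varY"
  by (auto simp: coeffs_in_def cst_def varX_def varY_def coeff_pCons field_closedD split: nat.split)

lemma coeffs_in_power: "field_closed K \<Longrightarrow> coeffs_in K G \<Longrightarrow> coeffs_in K (G ^ n)"
  by (induction n) (auto intro: coeffs_in_mult simp: coeffs_in_cst[of K 1, simplified] field_closedD)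

definition fls_coeffs_in :: "'k::field set \<Rightarrow> 'k fls \<Rightarrow> bool" where
  "fls_coeffs_in K f \<longleftrightarrow> (\<forall>n. f $$ n \<in> K)"

lemma fls_coeffs_in_0 [simp]: "field_closed K \<Longrightarrow> fls_coeffs_in K 0"
  and fls_coeffs_in_1 [simp]: "field_closed K \<Longrightarrow> fls_coeffs_in K 1"
  and fls_coeffs_in_X [simp]: "field_closed K \<Longrightarrow> fls_coeffs_in K fls_X"
  and fls_coeffs_in_const: "field_closed K \<Longrightarrow> c \<in> K \<Longrightarrow> fls_coeffs_in K (fls_const c)"
  and fls_coeffs_in_add: "field_closed K \<Longrightarrow> fls_coeffs_in K f \<Longrightarrow> fls_coeffs_in K g \<Longrightarrow> fls_coeffs_in K (f + g)"
  and fls_coeffs_in_diff: "field_closed K \<Longrightarrow> fls_coeffs_in K f \<Longrightarrow> fls_coeffs_in K g \<Longrightarrow> fls_coeffs_in K (f - g)"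
  by (simp_all add: fls_coeffs_in_def field_closedD fls_one_nth)

lemma fls_coeffs_in_mult:
  "field_closed K \<Longrightarrow> fls_coeffs_in K f \<Longrightarrow> fls_coeffs_in K g \<Longrightarrow> fls_coeffs_in K (f * g)"
  unfolding fls_coeffs_in_def fls_times_nth(2) by (auto intro!: field_closed_sum field_closedD(4))

lemma fls_coeffs_in_power: "field_closed K \<Longrightarrow> fls_coeffs_in K f \<Longrightarrow> fls_coeffs_in K (f ^ n)"
  by (induction n) (auto intro: fls_coeffs_in_mult)

lemma fls_coeffs_in_sum:
  "field_closed K \<Longrightarrow> (\<And>a. a \<in> A \<Longrightarrow> fls_coeffs_in K (f a)) \<Longrightarrow> fls_coeffs_in K (sum f A)"
  by (induction A rule: infinite_finite_induct) (auto intro: fls_coeffs_in_add)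

lemma fls_coeffs_in_poly_fls:
  "field_closed K \<Longrightarrow> poly_coeffs_in K p \<Longrightarrow> fls_coeffs_in K x \<Longrightarrow> fls_coeffs_in K (poly_fls p x)"
proof (induction p)
  case (pCons c p)
  have "c \<in> K" "poly_coeffs_in K p"
    using pCons.prems(2)[unfolded poly_coeffs_in_def, rule_format, of 0]
      pCons.prems(2)[unfolded poly_coeffs_in_def, rule_format, of "Suc i" for i]
    by (simp_all add: poly_coeffs_in_def)
  with pCons show ?case by (auto intro!: fls_coeffs_in_add fls_coeffs_in_mult fls_coeffs_in_const)
qed simp

lemma fls_coeffs_in_eval2_fls:
  "field_closed K \<Longrightarrow> coeffs_in K G \<Longrightarrow> fls_coeffs_in K x \<Longrightarrow> fls_coeffs_in K y \<Longrightarrow> fls_coeffs_in K (eval2_fls G x y)"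
proof (induction G)
  case (pCons c G)
  have "poly_coeffs_in K c" "coeffs_in K G"
    using pCons.prems(2)[unfolded coeffs_in_iff, rule_format, of 0]
      pCons.prems(2)[unfolded coeffs_in_iff, rule_format, of "Suc j" for j]
    by (simp_all add: coeffs_in_iff)
  with pCons show ?case by (auto intro!: fls_coeffs_in_add fls_coeffs_in_mult fls_coeffs_in_poly_fls)
qed simp


section \<open>Hensel lifting of a smooth branch\<close>

lemma ord_ge_telescope:
  assumes step: "\<And>n. ord_ge (int n + 1) (zs (Suc n) - zs n)" and "j \<le> m"
  shows "ord_ge (int j + 1) (zs m - zs j)"
  using assms(2)
proof (induction m)
  case (Suc m)
  show ?case
  proof (cases "j = Suc m")
    case False
    then have "ord_ge (int j + 1) ((zs (Suc m) - zs m) + (zs m - zs j))"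
      using Suc ord_ge_mono[OF _ step[of m]] by (intro ord_ge_add) simp_all
    then show ?thesis by simp
  qed simp
qed simp

lemma fls_cauchy_limit:
  assumes K: "field_closed K"
    and zs: "\<And>n. ord_ge 1 (zs n)" "\<And>n. fls_coeffs_in K (zs n)"
    and step: "\<And>n. ord_ge (int n + 1) (zs (Suc n) - zs n)"
  obtains z where "ord_ge 1 z" "fls_coeffs_in K z" "\<And>n. ord_ge (int n) (z - zs n)"
proof
  define z where "z = Abs_fls (\<lambda>i. if i < 0 then 0 else zs (Suc (nat i)) $$ i)"
  have z_nth: "z $$ i = (if i < 0 then 0 else zs (Suc (nat i)) $$ i)" for i
    unfolding z_def by (rule nth_Abs_fls_lower_bound[of 0]) simp
  show "ord_ge (int n) (z - zs n)" for n
    unfolding ord_ge_def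
  proof (intro allI impI)
    fix i assume i: "i < int n"
    show "(z - zs n) $$ i = 0"
    proof (cases "i < 0")
      case True
      then show ?thesis using zs(1)[of n] by (simp add: z_nth ord_ge_def)
    next
      case False
      then have "ord_ge (int (Suc (nat i)) + 1) (zs n - zs (Suc (nat i)))"
        using i by (intro ord_ge_telescope[OF step]) simp
      then show ?thesis using False by (simp add: z_nth ord_ge_def)
    qed
  qed
  show "ord_ge 1 z"
    unfolding ord_ge_def
  proof (intro allI impI)
    fix i :: int
    assume "i < 1"
    then show "z $$ i = 0"
      using zs(1)[of 1] by (cases "i < 0") (simp_all add: z_nth ord_ge_def)
  qed
  show "fls_coeffs_in K z"
    using zs(2) K by (simp add: fls_coeffs_in_def z_nth field_closedD)
qed

lemma fls_contraction_fixpoint: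
  assumes K: "field_closed K"
    and maps: "\<And>z. ord_ge 1 z \<Longrightarrow> ord_ge 1 (T z)"
    and coeffs: "\<And>z. fls_coeffs_in K z \<Longrightarrow> fls_coeffs_in K (T z)"
    and contracting: "\<And>z1 z2 n. ord_ge 1 z1 \<Longrightarrow> ord_ge 1 z2 \<Longrightarrow> ord_ge n (z1 - z2) \<Longrightarrow>
        ord_ge (n + 1) (T z1 - T z2)"
  obtains z where "ord_ge 1 z" "fls_coeffs_in K z" "T z = z"
proof -
  define zs where "zs n = (T ^^ n) 0" for n
  have zs_Suc: "zs (Suc n) = T (zs n)" for n
    by (simp add: zs_def)
  have zs1: "ord_ge 1 (zs n)" for n
    by (induction n) (simp_all add: zs_def maps)
  have zsK: "fls_coeffs_in K (zs n)" for n
    by (induction n) (simp_all add: zs_def coeffs K)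
  have step: "ord_ge (int n + 1) (zs (Suc n) - zs n)" for n
  proof (induction n)
    case 0
    then show ?case using zs1[of 1] by (simp add: zs_def)
  next
    case (Suc n)
    then show ?case using contracting[OF zs1 zs1 Suc] by (simp add: zs_Suc add_ac)
  qed
  obtain z where z: "ord_ge 1 z" "fls_coeffs_in K z" and lim: "\<And>n. ord_ge (int n) (z - zs n)"
    using fls_cauchy_limit[OF K zs1 zsK step] by blast
  have "T z - z = 0"
  proof (rule ord_ge_all_imp_zero)
    fix n :: nat
    have "ord_ge (int n + 1) (T z - T (zs n))"
      by (rule contracting[OF z(1) zs1 lim])
    moreover have "ord_ge (int n + 1) (zs (Suc n) - z)"
      using ord_ge_minus[OF lim[of "Suc n"]] by (simp add: add.commute)
    moreover have "T z - z = (T z - T (zs n)) + (zs (Suc n) - z)"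
      by (simp add: zs_Suc)
    ultimately have "ord_ge (int n + 1) (T z - z)"
      by (metis ord_ge_add)
    then show "ord_ge (int n) (T z - z)"
      by (rule ord_ge_mono[rotated]) simp
  qed
  then have "T z = z" by simp
  with z that show ?thesis by blast
qed

lemma eval2_fls_diff_at_branch:
  assumes F: "F = (varY - cst b) * A + (varX - cst a) * B"
    and z1: "ord_ge 1 z1" and z2: "ord_ge 1 z2"
  obtains S where "fls_regular S" "S $$ 0 = eval2 A a b"
    "eval2_fls F (local_x a) (fls_const b + z1) - eval2_fls F (local_x a) (fls_const b + z2) = (z1 - z2) * S"
proof -
  define Av where "Av z = eval2_fls A (local_x a) (fls_const b + z)" for z
  define Bv where "Bv z = eval2_fls B (local_x a) (fls_const b + z)" for z
  note reg = fls_regular_local_x fls_regular_const_add[OF z1] fls_regular_const_add[OF z2]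
  obtain rA where "fls_regular rA"
      "Av z1 - Av z2 = ((fls_const b + z1) - (fls_const b + z2)) * rA"
    unfolding Av_def by (rule eval2_fls_diff_factor[OF reg])
  then have rA: "fls_regular rA" "Av z1 - Av z2 = (z1 - z2) * rA" by simp_all
  obtain rB where "fls_regular rB"
      "Bv z1 - Bv z2 = ((fls_const b + z1) - (fls_const b + z2)) * rB"
    unfolding Bv_def by (rule eval2_fls_diff_factor[OF reg])
  then have rB: "fls_regular rB" "Bv z1 - Bv z2 = (z1 - z2) * rB" by simp_all
  have "eval2_fls F (local_x a) (fls_const b + z1) - eval2_fls F (local_x a) (fls_const b + z2)
      = (z1 - z2) * Av z1 + z2 * (Av z1 - Av z2) + fls_X * (Bv z1 - Bv z2)"
    unfolding F Av_def Bv_def by (simp add: algebra_simps)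
  also have "\<dots> = (z1 - z2) * (Av z1 + z2 * rA + fls_X * rB)"
    unfolding rA(2) rB(2) by (simp add: algebra_simps)
  finally have diff: "eval2_fls F (local_x a) (fls_const b + z1) - eval2_fls F (local_x a) (fls_const b + z2)
      = (z1 - z2) * (Av z1 + z2 * rA + fls_X * rB)" .
  have o1: "ord_ge 1 (z2 * rA)" "ord_ge 1 (fls_X * rB)"
    using ord_ge_mult[OF z2 rA(1)] ord_ge_mult[OF ord_ge_X rB(1)] by simp_all
  have "fls_regular (Av z1 + z2 * rA + fls_X * rB)"
    using o1 fls_regular_eval2_fls[OF reg(1,2)] unfolding Av_def
    by (intro ord_ge_add) (simp_all add: ord_ge_1_imp_regular)
  moreover have "(Av z1 + z2 * rA + fls_X * rB) $$ 0 = eval2 A a b"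
    using o1 eval2_fls_local_nth_0[OF z1] by (simp add: Av_def ord_ge_1_iff)
  ultimately show ?thesis using diff that by blast
qed

lemma hensel_fls:
  assumes K: "field_closed K" and a: "a \<in> K" and b: "b \<in> K" and FK: "coeffs_in K F"
    and F: "F = (varY - cst b) * A + (varX - cst a) * B"
    and A: "eval2 A a b \<noteq> 0" "eval2 A a b \<in> K"
  obtains z where "ord_ge 1 z" "fls_coeffs_in K z" "eval2_fls F (local_x a) (fls_const b + z) = 0"
proof -
  define c where "c = eval2 A a b"
  define Phi where "Phi z = eval2_fls F (local_x a) (fls_const b + z)" for z
  define T where "T z = z - fls_const (inverse c) * Phi z" for z
  have "eval2 F a b = 0"
    by (simp add: F)
  then have "ord_ge 1 (T z)" if z: "ord_ge 1 z" for z
  proof -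
    have Phi: "ord_ge 1 (Phi z)"
      using eval2_fls_local_nth_0[OF z, of F] \<open>eval2 F a b = 0\<close>
        fls_regular_eval2_fls[OF fls_regular_local_x fls_regular_const_add[OF z], of F]
      by (simp add: Phi_def ord_ge_1_iff)
    show ?thesis
      using z ord_ge_mult[OF ord_ge_const Phi, of "inverse c"] unfolding T_def by (simp add: ord_ge_diff)
  qed
  moreover have "fls_coeffs_in K (T z)" if "fls_coeffs_in K z" for z
    unfolding T_def Phi_def using that K FK a b A(2)
    by (intro fls_coeffs_in_diff fls_coeffs_in_mult fls_coeffs_in_const fls_coeffs_in_eval2_fls
        fls_coeffs_in_add) (auto simp: c_def field_closed_def)
  moreover have "ord_ge (n + 1) (T z1 - T z2)"
    if z1: "ord_ge 1 z1" and z2: "ord_ge 1 z2" and n: "ord_ge n (z1 - z2)" for z1 z2 n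
  proof -
    obtain S where S: "fls_regular S" "S $$ 0 = c" "Phi z1 - Phi z2 = (z1 - z2) * S"
      using eval2_fls_diff_at_branch[OF F z1 z2] unfolding Phi_def c_def by blast
    have "T z1 - T z2 = (z1 - z2) - fls_const (inverse c) * (Phi z1 - Phi z2)"
      unfolding T_def by (simp add: algebra_simps)
    also have "\<dots> = (z1 - z2) * (1 - fls_const (inverse c) * S)"
      unfolding S(3) by (simp add: algebra_simps)
    finally have T: "T z1 - T z2 = (z1 - z2) * (1 - fls_const (inverse c) * S)" .
    have "ord_ge 1 (1 - fls_const (inverse c) * S)"
      using S A(1) fls_regular_const_mult[OF S(1), of "inverse c"] unfolding ord_ge_1_iff c_def
      by (simp add: fls_regular_nth_0_mult ord_ge_diff)
    with T show ?thesis using ord_ge_mult[OF n] by simp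
  qed
  ultimately obtain z where z: "ord_ge 1 z" "fls_coeffs_in K z" "T z = z"
    using fls_contraction_fixpoint[OF K, of T] by blast
  then have "Phi z = 0" using A(1) by (simp add: T_def c_def)
  with z show ?thesis using that by (simp add: Phi_def)
qed


section \<open>Orders of vanishing along a smooth branch\<close>

lemma ordp_eq_0_if_eval2_nonzero:
  assumes G: "eval2 G a b \<noteq> 0" and F: "eval2 F a b = 0"
  shows "ordp F a b G = 0"
proof -
  have "\<not> in_mpow F a b n G" if "n > 0" for n
  proof
    assume "in_mpow F a b n G"
    then obtain h v u where h: "eval2 h a b \<noteq> 0"
      and eq: "h * G = v * F + (\<Sum>i\<le>n. u i * (varX - cst a) ^ i * (varY - cst b) ^ (n - i))"
      unfolding in_mpow_def by blast
    have "eval2 (h * G) a b = 0"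
      unfolding eq using F that by (auto simp: eval2_sum intro!: sum.neutral)
    with h G show False by simp
  qed
  moreover have "in_mpow F a b 0 G"
    unfolding in_mpow_def by (rule exI[of _ 1], rule exI[of _ 0], rule exI[of _ "\<lambda>_. G"]) simp
  ultimately have "{enat n |n. in_mpow F a b n G} = {0}"
    by (auto simp: zero_enat_def)
  then show ?thesis unfolding ordp_def by simp
qed

text \<open>A branch of the curve \<open>F = 0\<close> through \<open>(a, b)\<close> parametrised as \<open>x = a + t\<close>,
  \<open>y = b + z(t)\<close>; the condition on \<open>A\<close> says that \<open>\<partial>F/\<partial>y\<close> does not vanish at \<open>(a, b)\<close>.\<close>

locale smooth_branch =
  fixes F A B :: "'k::field bipoly" and a b :: 'k and z :: "'k fls"
  assumes split: "F = (varY - cst b) * A + (varX - cst a) * B"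
    and A: "eval2 A a b \<noteq> 0"
    and z: "ord_ge 1 z"
    and on_branch: "eval2_fls F (local_x a) (fls_const b + z) = 0"
begin

definition expand :: "'k bipoly \<Rightarrow> 'k fls" where
  "expand G = eval2_fls G (local_x a) (fls_const b + z)"

lemma expand_regular: "fls_regular (expand G)"
  unfolding expand_def by (rule fls_regular_eval2_fls[OF fls_regular_local_x fls_regular_const_add[OF z]])

lemma expand_nth_0: "expand G $$ 0 = eval2 G a b"
  unfolding expand_def by (rule eval2_fls_local_nth_0[OF z])

lemma expand_unit:
  assumes "eval2 H a b \<noteq> 0"
  shows "expand H \<noteq> 0" "fls_subdegree (expand H) = 0"
  using assms expand_nth_0[of H] fls_regular_unit_subdegree[OF expand_regular] by auto

lemma in_mpow_imp_le_subdegree: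
  assumes "in_mpow F a b n G" "expand G \<noteq> 0"
  shows "int n \<le> fls_subdegree (expand G)"
proof -
  obtain h V u where h: "eval2 h a b \<noteq> 0"
    and eq: "h * G = V * F + (\<Sum>i\<le>n. u i * (varX - cst a) ^ i * (varY - cst b) ^ (n - i))"
    using assms(1) unfolding in_mpow_def by blast
  have "expand h * expand G = (\<Sum>i\<le>n. expand (u i) * fls_X ^ i * z ^ (n - i))"
    using arg_cong[OF eq, of expand] by (simp add: expand_def eval2_fls_sum on_branch)
  moreover have "ord_ge (int n) (\<Sum>i\<le>n. expand (u i) * fls_X ^ i * z ^ (n - i))"
  proof (rule ord_ge_sum)
    fix i assume "i \<in> {..n}"
    moreover have "ord_ge (0 + int i * 1) (expand (u i) * fls_X ^ i)"
      by (rule ord_ge_mult[OF expand_regular ord_ge_power[OF ord_ge_X]])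
    ultimately show "ord_ge (int n) (expand (u i) * fls_X ^ i * z ^ (n - i))"
      using ord_ge_mult[OF _ ord_ge_power[OF z, of "n - i"]] by fastforce
  qed
  ultimately have "ord_ge (int n) (expand h * expand G)"
    by simp
  moreover have "fls_subdegree (expand h * expand G) = fls_subdegree (expand G)"
    using assms(2) expand_unit[OF h] by (simp add: fls_subdegree_mult)
  ultimately show ?thesis
    using assms(2) expand_unit(1)[OF h] by (simp add: ord_ge_iff)
qed

lemma X_power_factor_of_subdegree:
  assumes "expand G \<noteq> 0" "int j \<le> fls_subdegree (expand G)"
  shows "\<exists>H Gj V. eval2 H a b \<noteq> 0 \<and> H * G = (varX - cst a) ^ j * Gj + V * F"
  using assms(2)
proof (induction j)
  case 0
  show ?case by (rule exI[of _ 1], rule exI[of _ G], rule exI[of _ 0]) simp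
next
  case (Suc j)
  then obtain H Gj V where H: "eval2 H a b \<noteq> 0" and eq: "H * G = (varX - cst a) ^ j * Gj + V * F"
    by auto
  have e: "expand H * expand G = fls_X ^ j * expand Gj"
    using arg_cong[OF eq, of expand] by (simp add: expand_def on_branch)
  have nz: "expand H * expand G \<noteq> 0"
    using assms(1) expand_unit(1)[OF H] by simp
  then have "expand Gj \<noteq> 0"
    using e by auto
  moreover have "fls_subdegree (expand H * expand G) = fls_subdegree (expand G)"
    using assms(1) expand_unit[OF H] by (simp add: fls_subdegree_mult)
  ultimately have "int j + fls_subdegree (expand Gj) = fls_subdegree (expand G)"
    using e by (simp add: fls_subdegree_mult)
  then have "eval2 Gj a b = 0"
    using Suc.prems expand_nth_0[of Gj] by (auto simp: nth_fls_subdegree_zero_iff)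
  then obtain C D where CD: "Gj = (varX - cst a) * C + (varY - cst b) * D"
    by (metis bipoly_decompose_at cst_0 add_0)
  \<comment> \<open>\<open>(y - b) A \<equiv> -(x - a) B\<close> modulo \<open>F\<close>, so \<open>A\<close> trades a factor \<open>y - b\<close> for a factor \<open>x - a\<close>\<close>
  have AGj: "A * Gj = (varX - cst a) * (A * C - D * B) + D * F"
    unfolding CD split by (simp add: algebra_simps)
  have "(A * H) * G = A * (H * G)"
    by (simp add: mult.assoc)
  also have "\<dots> = (varX - cst a) ^ j * (A * Gj) + (A * V) * F"
    unfolding eq by (simp add: algebra_simps)
  also have "\<dots> = (varX - cst a) ^ Suc j * (A * C - D * B) + ((varX - cst a) ^ j * D + A * V) * F"
    unfolding AGj by (simp add: algebra_simps)
  finally have "(A * H) * G = (varX - cst a) ^ Suc j * (A * C - D * B) + ((varX - cst a) ^ j * D + A * V) * F" .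
  moreover have "eval2 (A * H) a b \<noteq> 0" using A H by simp
  ultimately show ?case by blast
qed

lemma ordp_eq_subdegree:
  assumes G: "expand G \<noteq> 0"
  shows "ordp F a b G = enat (nat (fls_subdegree (expand G)))"
proof -
  define v where "v = nat (fls_subdegree (expand G))"
  have v: "int v = fls_subdegree (expand G)"
    using G expand_regular[of G] by (simp add: v_def ord_ge_iff)
  obtain H Gv V where H: "eval2 H a b \<noteq> 0" and eq: "H * G = (varX - cst a) ^ v * Gv + V * F"
    using X_power_factor_of_subdegree[OF G, of v] v by auto
  have "in_mpow F a b v G"
    unfolding in_mpow_def
  proof (intro exI conjI)
    show "eval2 H a b \<noteq> 0" by (fact H)
    have "(\<Sum>i\<le>v. (if i = v then Gv else 0) * (varX - cst a) ^ i * (varY - cst b) ^ (v - i))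
        = (\<Sum>i\<le>v. if i = v then Gv * (varX - cst a) ^ v else 0)"
      by (rule sum.cong) auto
    then have "(\<Sum>i\<le>v. (if i = v then Gv else 0) * (varX - cst a) ^ i * (varY - cst b) ^ (v - i))
        = Gv * (varX - cst a) ^ v"
      by simp
    then show "H * G = V * F + (\<Sum>i\<le>v. (if i = v then Gv else 0) * (varX - cst a) ^ i * (varY - cst b) ^ (v - i))"
      using eq by (simp add: algebra_simps)
  qed
  moreover have "n \<le> v" if "in_mpow F a b n G" for n
    using in_mpow_imp_le_subdegree[OF that G] v by linarith
  ultimately have "Sup {enat n |n. in_mpow F a b n G} = enat v"
    by (intro antisym Sup_least Sup_upper) auto
  then show ?thesis by (simp add: ordp_def v_def)
qed

end


definition weier_over :: "'k::field weier \<Rightarrow> 'k set \<Rightarrow> bool" where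
  "weier_over E K \<longleftrightarrow> wa1 E \<in> K \<and> wa2 E \<in> K \<and> wa3 E \<in> K \<and> wa4 E \<in> K \<and> wa6 E \<in> K"

lemma coeffs_in_wpoly: "field_closed K \<Longrightarrow> weier_over E K \<Longrightarrow> coeffs_in K (wpoly E)"
  unfolding wpoly_def weier_over_def
  by (intro coeffs_in_add coeffs_in_diff coeffs_in_mult coeffs_in_power coeffs_in_cst
      coeffs_in_varX coeffs_in_varY; simp)

lemma coeffs_in_wpoly_inf: "field_closed K \<Longrightarrow> weier_over E K \<Longrightarrow> coeffs_in K (wpoly_inf E)"
  unfolding wpoly_inf_def weier_over_def
  by (intro coeffs_in_add coeffs_in_diff coeffs_in_mult coeffs_in_power coeffs_in_cst
      coeffs_in_varX coeffs_in_varY; simp)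

definition weier_cubic :: "'k::field weier \<Rightarrow> 'k poly" where
  "weier_cubic E = [:wa6 E, wa4 E, wa2 E, 1:]"

definition weier_linear :: "'k::field weier \<Rightarrow> 'k poly" where
  "weier_linear E = [:wa3 E, wa1 E:]"

lemma wpoly_as_poly_in_y: "wpoly E = [: - weier_cubic E, weier_linear E, 1 :]"
  unfolding wpoly_def weier_cubic_def weier_linear_def varX_def varY_def cst_def
  by (simp add: power2_eq_square power3_eq_cube algebra_simps one_pCons)

lemma degree_wpoly: "degree (wpoly E) = 2"
  and lead_coeff_wpoly: "coeff (wpoly E) 2 = 1"
  by (simp_all add: wpoly_as_poly_in_y numeral_2_eq_2)

lemma wpoly_divmod: obtains Q r0 r1 where "G = wpoly E * Q + [:r0, r1:]"
proof -
  have nz: "wpoly E \<noteq> 0"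
    using lead_coeff_wpoly[of E] by auto
  obtain Q r where "pseudo_divmod G (wpoly E) = (Q, r)"
    by fastforce
  from pseudo_divmod[OF nz this] have "G = wpoly E * Q + r" "r = 0 \<or> degree r < 2"
    by (simp_all add: degree_wpoly lead_coeff_wpoly)
  moreover from this(2) have "r = [:coeff r 0, coeff r 1:]"
    by (intro poly_eqI) (auto simp: coeff_pCons coeff_eq_0 split: nat.split)
  ultimately show ?thesis using that by metis
qed

lemma eval2_wpoly: "on_curve E a b \<Longrightarrow> eval2 (wpoly E) a b = 0"
  by (simp add: wpoly_def on_curve_def algebra_simps)

lemma wpoly_not_dvd_const: "p \<noteq> 0 \<Longrightarrow> \<not> wpoly E dvd [:p:]"
  using dvd_imp_degree_le[of "wpoly E" "[:p:]"] by (auto simp: degree_wpoly)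

lemma wpoly_split_at:
  assumes "on_curve E a b"
  shows "wpoly E = (varY - cst b) * (varY + cst b + cst (wa1 E) * varX + cst (wa3 E))
     + (varX - cst a) * (cst (wa1 E * b) - (varX ^ 2 + cst a * varX + cst (a ^ 2))
                         - cst (wa2 E) * (varX + cst a) - cst (wa4 E))"
proof -
  have a6: "wa6 E = b^2 + wa1 E * a * b + wa3 E * b - a^3 - wa2 E * a^2 - wa4 E * a"
    using assms by (simp add: on_curve_def algebra_simps)
  show ?thesis unfolding wpoly_def a6 cst_add cst_diff cst_mult cst_power
    by algebra
qed

definition wpoly_inf_cofactor :: "'k::field weier \<Rightarrow> 'k bipoly" where
  "wpoly_inf_cofactor E = 1 + cst (wa1 E) * varX + cst (wa3 E) * varY - cst (wa2 E) * varX ^ 2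
      - cst (wa4 E) * varX * varY - cst (wa6 E) * varY ^ 2"

lemma wpoly_inf_split_at_origin:
  "wpoly_inf E = (varY - cst 0) * wpoly_inf_cofactor E + (varX - cst 0) * (- (varX ^ 2))"
  unfolding wpoly_inf_def wpoly_inf_cofactor_def
  by (simp add: algebra_simps power2_eq_square power3_eq_cube)

lemma eval2_wpoly_inf_cofactor [simp]: "eval2 (wpoly_inf_cofactor E) 0 0 = 1"
  by (simp add: wpoly_inf_cofactor_def)

lemma eval2_fls_wpoly: "eval2_fls (wpoly E) x y = y ^ 2 + fls_const (wa1 E) * x * y
    + fls_const (wa3 E) * y - x ^ 3 - fls_const (wa2 E) * x ^ 2 - fls_const (wa4 E) * x - fls_const (wa6 E)"
  and eval2_fls_wpoly_inf: "eval2_fls (wpoly_inf E) x y = y + fls_const (wa1 E) * x * y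
    + fls_const (wa3 E) * y ^ 2 - x ^ 3 - fls_const (wa2 E) * x ^ 2 * y - fls_const (wa4 E) * x * y ^ 2
    - fls_const (wa6 E) * y ^ 3"
  by (simp_all add: wpoly_def wpoly_inf_def)

lemma eval2_fls_wpoly_in_y:
  "eval2_fls (wpoly E) x y = y ^ 2 + poly_fls (weier_linear E) x * y - poly_fls (weier_cubic E) x"
  by (simp add: wpoly_as_poly_in_y algebra_simps power2_eq_square)

lemma norm_of_linear_in_y_eq_0:
  fixes r0 r1 c l :: "'k::field poly"
  assumes c: "degree c = 3" and l: "degree l \<le> 1"
    and eq: "r0 ^ 2 - l * r0 * r1 - c * r1 ^ 2 = 0"
  shows "r1 = 0"
proof (rule ccontr)
  assume r1: "r1 \<noteq> 0"
  have e: "c * r1 ^ 2 = r0 ^ 2 - l * r0 * r1"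
    using eq by (simp add: algebra_simps)
  have odd_degree: "degree (c * r1 ^ 2) = 3 + 2 * degree r1"
    using c r1 by (subst degree_mult_eq) (auto simp: degree_power_eq)
  show False
  proof (cases "r0 = 0")
    case True
    then show False using e c r1 by auto
  next
    case r0: False
    have d2: "degree (r0 ^ 2) = 2 * degree r0"
      using r0 by (simp add: degree_power_eq)
    have d3: "degree (l * r0 * r1) \<le> 1 + degree r0 + degree r1"
      using l degree_mult_le[of "l * r0" r1] degree_mult_le[of l r0] by linarith
    show False
    proof (cases "degree r0 \<le> degree r1 + 1")
      case True
      have "degree (r0 ^ 2 - l * r0 * r1) \<le> 2 * degree r1 + 2"
        using True d2 d3 by (intro degree_diff_le) auto
      then show False using e odd_degree by simp
    next
      case False
      have "degree (r0 ^ 2 - l * r0 * r1) = 2 * degree r0"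
        using False d2 d3 by (subst diff_conv_add_uminus, subst degree_add_eq_left) auto
      then show False using e odd_degree by presburger
    qed
  qed
qed

lemma poly_fls_local_x:
  assumes "p \<noteq> 0"
  shows "poly_fls p (local_x a) \<noteq> 0" "fls_subdegree (poly_fls p (local_x a)) = int (order a p)"
proof -
  obtain q where q: "p = [:- a, 1:] ^ order a p * q" and nd: "\<not> [:- a, 1:] dvd q"
    using order_decomp[OF assms] by blast
  have "poly_fls q (local_x a) $$ 0 = poly q a"
    by (simp add: poly_fls_nth_0 fls_regular_local_x)
  moreover have "poly q a \<noteq> 0"
    using nd by (simp add: poly_eq_0_iff_dvd)
  ultimately have "poly_fls q (local_x a) \<noteq> 0" "fls_subdegree (poly_fls q (local_x a)) = 0"
    using fls_regular_unit_subdegree[of "poly_fls q (local_x a)"]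
      fls_regular_poly_fls[OF fls_regular_local_x, of q a] by auto
  moreover have "poly_fls p (local_x a) = fls_X ^ order a p * poly_fls q (local_x a)"
    by (subst q) simp
  ultimately show "poly_fls p (local_x a) \<noteq> 0" "fls_subdegree (poly_fls p (local_x a)) = int (order a p)"
    by (simp_all add: fls_subdegree_mult)
qed

lemma poly_fls_negative_subdegree:
  assumes u: "fls_subdegree u < 0" "u \<noteq> 0" and "p \<noteq> 0"
  shows "poly_fls p u \<noteq> 0 \<and> fls_subdegree (poly_fls p u) = int (degree p) * fls_subdegree u"
  using assms(3)
proof (induction p)
  case (pCons c p)
  show ?case
  proof (cases "p = 0")
    case False
    then have IH: "poly_fls p u \<noteq> 0" "fls_subdegree (poly_fls p u) = int (degree p) * fls_subdegree u"
      using pCons by auto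
    have nz: "u * poly_fls p u \<noteq> 0"
      using IH u by simp
    have sd: "fls_subdegree (u * poly_fls p u) = (int (degree p) + 1) * fls_subdegree u"
      using IH u by (simp add: fls_subdegree_mult algebra_simps)
    have neg: "fls_subdegree (u * poly_fls p u) < fls_subdegree (fls_const c)"
      using sd u(1) by (simp add: mult_pos_neg)
    have "fls_subdegree (poly_fls (pCons c p) u) = fls_subdegree (u * poly_fls p u)"
      using fls_subdegree_add_eq2[OF nz neg] by simp
    moreover have "poly_fls (pCons c p) u \<noteq> 0"
    proof
      assume "poly_fls (pCons c p) u = 0"
      then have "fls_const c = - (u * poly_fls p u)"
        by (simp add: eq_neg_iff_add_eq_0)
      then show False
        using neg by (simp add: fls_subdegree_minus)
    qed
    ultimately show ?thesis using sd False by (simp add: algebra_simps)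
  qed (use pCons in simp)
qed simp

lemma wpoly_dvd_if_vanishes_at_transcendental:
  assumes x: "\<And>p. p \<noteq> 0 \<Longrightarrow> poly_fls p x \<noteq> 0"
    and W: "eval2_fls (wpoly E) x y = 0" and G: "eval2_fls G x y = 0"
  shows "wpoly E dvd G"
proof -
  obtain Q r0 r1 where G_eq: "G = wpoly E * Q + [:r0, r1:]"
    using wpoly_divmod by blast
  have r: "poly_fls r0 x + y * poly_fls r1 x = 0"
    using G W unfolding G_eq by simp
  define R where "R = r0 ^ 2 - weier_linear E * r0 * r1 - weier_cubic E * r1 ^ 2"
  \<comment> \<open>\<open>R\<close> is the norm of \<open>r0 + r1 y\<close> from \<open>k(x, y)\<close> down to \<open>k(x)\<close>\<close>
  have "poly_fls R x = poly_fls r1 x ^ 2 * eval2_fls (wpoly E) x y"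
  proof -
    have r1y: "poly_fls r1 x * y = - poly_fls r0 x"
      using r by (simp add: algebra_simps eq_neg_iff_add_eq_0)
    have "poly_fls r1 x ^ 2 * eval2_fls (wpoly E) x y
       = (poly_fls r1 x * y) ^ 2 + poly_fls (weier_linear E) x * poly_fls r1 x * (poly_fls r1 x * y)
         - poly_fls (weier_cubic E) x * poly_fls r1 x ^ 2"
      unfolding eval2_fls_wpoly_in_y by (simp add: algebra_simps power2_eq_square)
    also have "\<dots> = poly_fls R x"
      unfolding r1y R_def by (simp add: algebra_simps power2_eq_square)
    finally show ?thesis by simp
  qed
  with W have "poly_fls R x = 0"
    by simp
  then have "R = 0"
    using x by blast
  moreover have "degree (weier_cubic E) = 3" "degree (weier_linear E) \<le> 1"
    by (simp_all add: weier_cubic_def weier_linear_def)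
  ultimately have r1: "r1 = 0"
    using norm_of_linear_in_y_eq_0 unfolding R_def by blast
  with r have "poly_fls r0 x = 0"
    by simp
  then have "r0 = 0"
    using x by blast
  with r1 G_eq show ?thesis
    by simp
qed


section \<open>Orders and values at the points of the curve\<close>

definition is_fls_value :: "'k::field fls \<Rightarrow> 'k fls \<Rightarrow> 'k \<Rightarrow> bool" where
  "is_fls_value G H c \<longleftrightarrow>
     G - fls_const c * H = 0 \<or> fls_subdegree H < fls_subdegree (G - fls_const c * H)"

lemma the_fls_value:
  fixes G H :: "'k::field fls"
  assumes H: "H \<noteq> 0" and GH: "G = 0 \<or> fls_subdegree H \<le> fls_subdegree G"
  shows "(THE c. is_fls_value G H c) = G $$ fls_subdegree H / H $$ fls_subdegree H"
proof (rule the_equality)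
  define v where "v = fls_subdegree H"
  define c where "c = G $$ v / H $$ v"
  have Hv: "H $$ v \<noteq> 0"
    using H by (simp add: v_def)
  have below: "G $$ k = 0" "H $$ k = 0" if "k < v" for k
    using GH that by (auto simp: v_def)
  have "v < fls_subdegree (G - fls_const c * H)" if "G - fls_const c * H \<noteq> 0"
  proof (rule fls_subdegree_greaterI[OF that])
    fix k assume "k \<le> v"
    then consider "k = v" | "k < v"
      by linarith
    then show "(G - fls_const c * H) $$ k = 0"
    proof cases
      case 1
      then show ?thesis using Hv by (simp add: c_def)
    next
      case 2
      then show ?thesis using below by simp
    qed
  qed
  then show "is_fls_value G H (G $$ fls_subdegree H / H $$ fls_subdegree H)"
    unfolding is_fls_value_def c_def v_def by blast
  fix c' assume "is_fls_value G H c'"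
  then have "(G - fls_const c' * H) $$ v = 0"
    unfolding is_fls_value_def v_def by (metis fls_eq0_below_subdegree fls_zero_nth)
  then show "c' = G $$ fls_subdegree H / H $$ fls_subdegree H"
    using Hv by (simp add: v_def field_simps)
qed

lemma fls_value_ratio_mult:
  fixes G H S :: "'k::field fls"
  assumes S: "S \<noteq> 0" and H: "H \<noteq> 0" and GH: "G = 0 \<or> fls_subdegree H \<le> fls_subdegree G"
  shows "(S * G) $$ fls_subdegree (S * H) / (S * H) $$ fls_subdegree (S * H)
       = G $$ fls_subdegree H / H $$ fls_subdegree H"
proof -
  have "is_fls_value (S * G) (S * H) c \<longleftrightarrow> is_fls_value G H c" for c
  proof -
    have "S * G - fls_const c * (S * H) = S * (G - fls_const c * H)"
      by (simp add: algebra_simps)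
    then show ?thesis
      unfolding is_fls_value_def using S H
      by (cases "G - fls_const c * H = 0") (simp_all add: fls_subdegree_mult)
  qed
  then have "is_fls_value (S * G) (S * H) = is_fls_value G H"
    by blast
  moreover have "S * G = 0 \<or> fls_subdegree (S * H) \<le> fls_subdegree (S * G)"
    using GH S H by (cases "G = 0") (auto simp: fls_subdegree_mult)
  ultimately show ?thesis
    using the_fls_value[OF H GH] the_fls_value[of "S * H" "S * G"] S H by simp
qed

lemma fval_eq_fls_value_ratio:
  assumes dvd: "\<And>G. wpoly E dvd G \<longleftrightarrow> Phi G = 0"
    and ord: "\<And>G. Phi G \<noteq> 0 \<Longrightarrow> ord_poly E P G = fls_subdegree (Phi G)"
    and lin: "\<And>c. Phi (g - cst c * h) = Phi g - fls_const c * Phi h"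
    and h: "\<not> wpoly E dvd h" and gh: "wpoly E dvd g \<or> ord_poly E P h \<le> ord_poly E P g"
  shows "Phi g = 0 \<or> fls_subdegree (Phi h) \<le> fls_subdegree (Phi g)"
    and "fval E P g h = Phi g $$ fls_subdegree (Phi h) / Phi h $$ fls_subdegree (Phi h)"
proof -
  have hnz: "Phi h \<noteq> 0"
    using h dvd by simp
  show gh': "Phi g = 0 \<or> fls_subdegree (Phi h) \<le> fls_subdegree (Phi g)"
    using gh dvd ord hnz by (cases "Phi g = 0") auto
  have "(wpoly E dvd (g - cst c * h) \<or> ord_poly E P (g - cst c * h) > ord_poly E P h)
        \<longleftrightarrow> is_fls_value (Phi g) (Phi h) c" for c
    unfolding is_fls_value_def dvd lin[symmetric] using ord hnz by (cases "Phi (g - cst c * h) = 0") auto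
  then have "fval E P g h = (THE c. is_fls_value (Phi g) (Phi h) c)"
    unfolding fval_def by simp
  also have "\<dots> = Phi g $$ fls_subdegree (Phi h) / Phi h $$ fls_subdegree (Phi h)"
    by (rule the_fls_value[OF hnz gh'])
  finally show "fval E P g h = Phi g $$ fls_subdegree (Phi h) / Phi h $$ fls_subdegree (Phi h)" .
qed

definition affine_branch :: "'k::field weier \<Rightarrow> 'k \<Rightarrow> 'k \<Rightarrow> 'k fls \<Rightarrow> bool" where
  "affine_branch E a b z \<longleftrightarrow> on_curve E a b \<and> 2 * b + wa1 E * a + wa3 E \<noteq> 0 \<and> ord_ge 1 z \<and>
     eval2_fls (wpoly E) (local_x a) (fls_const b + z) = 0"

lemma eval2_wpoly_dy:
  "eval2 (varY + cst b + cst (wa1 E) * varX + cst (wa3 E)) a b = 2 * b + wa1 E * a + wa3 E"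
  by (simp add: algebra_simps)

lemma affine_branch_exists:
  assumes K: "field_closed K" and E: "weier_over E K" and a: "a \<in> K" and b: "b \<in> K"
    and on: "on_curve E a b" and smooth: "2 * b + wa1 E * a + wa3 E \<noteq> 0"
  obtains z where "affine_branch E a b z" "fls_coeffs_in K z"
proof -
  have "2 * b + wa1 E * a + wa3 E \<in> K"
    unfolding mult_2 using K E a b by (intro field_closedD(3,4)) (auto simp: weier_over_def)
  then obtain z where "ord_ge 1 z" "fls_coeffs_in K z"
      "eval2_fls (wpoly E) (local_x a) (fls_const b + z) = 0"
    using hensel_fls[OF K a b coeffs_in_wpoly[OF K E] wpoly_split_at[OF on]] smooth
    unfolding eval2_wpoly_dy by blast
  with on smooth show ?thesis
    using that by (auto simp: affine_branch_def)
qed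

lemma affine_branch_smooth_branch:
  assumes "affine_branch E a b z"
  obtains A B where "smooth_branch (wpoly E) A B a b z"
proof
  show "smooth_branch (wpoly E) (varY + cst b + cst (wa1 E) * varX + cst (wa3 E))
    (cst (wa1 E * b) - (varX ^ 2 + cst a * varX + cst (a ^ 2)) - cst (wa2 E) * (varX + cst a) - cst (wa4 E))
    a b z"
  proof
    show "wpoly E = (varY - cst b) * (varY + cst b + cst (wa1 E) * varX + cst (wa3 E))
      + (varX - cst a) * (cst (wa1 E * b) - (varX ^ 2 + cst a * varX + cst (a ^ 2))
                          - cst (wa2 E) * (varX + cst a) - cst (wa4 E))"
      using assms by (intro wpoly_split_at) (simp add: affine_branch_def)
  qed (use assms in \<open>simp_all add: affine_branch_def eval2_wpoly_dy\<close>)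
qed

lemma wpoly_dvd_iff_affine_branch:
  assumes "affine_branch E a b z"
  shows "wpoly E dvd G \<longleftrightarrow> eval2_fls G (local_x a) (fls_const b + z) = 0"
  using assms wpoly_dvd_if_vanishes_at_transcendental[of "local_x a" E] poly_fls_local_x(1)
  by (auto simp: affine_branch_def elim!: dvdE)

lemma ord_poly_affine_branch:
  assumes "affine_branch E a b z" and "eval2_fls G (local_x a) (fls_const b + z) \<noteq> 0"
  shows "ord_poly E (Pt a b) G = fls_subdegree (eval2_fls G (local_x a) (fls_const b + z))"
proof -
  obtain A B where "smooth_branch (wpoly E) A B a b z"
    using affine_branch_smooth_branch[OF assms(1)] .
  then interpret smooth_branch "wpoly E" A B a b z .
  show ?thesis
    using ordp_eq_subdegree[of G] expand_regular[of G] assms(2)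
    by (simp add: ord_poly_def expand_def ord_ge_iff)
qed

lemma ord_poly_affine_branch_const:
  assumes "affine_branch E a b z" "p \<noteq> 0"
  shows "ord_poly E (Pt a b) [:p:] = int (order a p)"
  using ord_poly_affine_branch[OF assms(1), of "[:p:]"] poly_fls_local_x[OF assms(2)] by simp

lemma fval_affine_branch:
  assumes z: "affine_branch E a b z" and h: "\<not> wpoly E dvd h"
    and gh: "wpoly E dvd g \<or> ord_poly E (Pt a b) h \<le> ord_poly E (Pt a b) g"
  defines "Phi \<equiv> \<lambda>G. eval2_fls G (local_x a) (fls_const b + z)"
  shows "fval E (Pt a b) g h = Phi g $$ fls_subdegree (Phi h) / Phi h $$ fls_subdegree (Phi h)"
  by (rule fval_eq_fls_value_ratio(2)[OF _ _ _ h gh])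
    (simp_all add: Phi_def wpoly_dvd_iff_affine_branch[OF z] ord_poly_affine_branch[OF z])

text \<open>In the chart \<open>u = x/y\<close>, \<open>w = 1/y\<close> at infinity, a branch is \<open>u = t\<close>, \<open>w = z(t)\<close>;
  a polynomial in \<open>x, y\<close> is then expanded at \<open>x = t/z\<close>, \<open>y = 1/z\<close>.\<close>

definition branch_at_inf :: "'k::field weier \<Rightarrow> 'k fls \<Rightarrow> bool" where
  "branch_at_inf E z \<longleftrightarrow> ord_ge 1 z \<and> eval2_fls (wpoly_inf E) fls_X z = 0"

definition expand_at_inf :: "'k::field fls \<Rightarrow> 'k bipoly \<Rightarrow> 'k fls" where
  "expand_at_inf z G = eval2_fls G (fls_X / z) (1 / z)"

lemma branch_at_inf_exists:
  assumes K: "field_closed K" and E: "weier_over E K"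
  obtains z where "branch_at_inf E z" "fls_coeffs_in K z"
  using hensel_fls[OF K field_closedD(1,1)[OF K] coeffs_in_wpoly_inf[OF K E] wpoly_inf_split_at_origin]
    field_closedD(2)[OF K]
  by (auto simp: branch_at_inf_def)

lemma branch_at_inf_smooth_branch:
  assumes "branch_at_inf E z"
  shows "smooth_branch (wpoly_inf E) (wpoly_inf_cofactor E) (- (varX ^ 2)) 0 0 z"
proof
qed (rule wpoly_inf_split_at_origin, use assms in \<open>simp_all add: branch_at_inf_def\<close>)

lemma branch_at_inf_subdegree:
  assumes "branch_at_inf E z"
  shows "z \<noteq> 0" "fls_subdegree z = 3"
proof -
  interpret smooth_branch "wpoly_inf E" "wpoly_inf_cofactor E" "- (varX ^ 2)" 0 0 z
    by (rule branch_at_inf_smooth_branch[OF assms])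
  have e: "z * expand (wpoly_inf_cofactor E) = fls_X ^ 3"
    using on_branch unfolding wpoly_inf_split_at_origin
    by (simp add: expand_def power2_eq_square power3_eq_cube mult.assoc)
  have A: "expand (wpoly_inf_cofactor E) \<noteq> 0" "fls_subdegree (expand (wpoly_inf_cofactor E)) = 0"
    using expand_unit[of "wpoly_inf_cofactor E"] by simp_all
  show z: "z \<noteq> 0"
    using e by auto
  show "fls_subdegree z = 3"
    using arg_cong[OF e, of fls_subdegree] z A by (simp add: fls_subdegree_mult)
qed

lemma expand_at_inf_wpoly:
  assumes "branch_at_inf E z"
  shows "expand_at_inf z (wpoly E) = 0"
proof -
  have z: "z \<noteq> 0"
    using branch_at_inf_subdegree[OF assms] by simp
  have "expand_at_inf z (wpoly E) * z ^ 3 = eval2_fls (wpoly_inf E) fls_X z"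
    unfolding expand_at_inf_def eval2_fls_wpoly eval2_fls_wpoly_inf using z
    by (simp add: field_simps power2_eq_square power3_eq_cube)
  then show ?thesis
    using assms z by (simp add: branch_at_inf_def)
qed

lemma expand_at_inf_const:
  assumes "branch_at_inf E z" "p \<noteq> 0"
  shows "expand_at_inf z [:p:] \<noteq> 0" "fls_subdegree (expand_at_inf z [:p:]) = - 2 * int (degree p)"
proof -
  have z: "z \<noteq> 0" "fls_subdegree z = 3"
    using branch_at_inf_subdegree[OF assms(1)] by auto
  then have "fls_subdegree (fls_X / z) = -2" "fls_X / z \<noteq> 0"
    by (simp_all add: fls_divide_subdegree)
  then show "expand_at_inf z [:p:] \<noteq> 0" "fls_subdegree (expand_at_inf z [:p:]) = - 2 * int (degree p)"
    using poly_fls_negative_subdegree[of "fls_X / z" p] assms(2) by (simp_all add: expand_at_inf_def)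
qed

lemma wpoly_dvd_iff_branch_at_inf:
  assumes z: "branch_at_inf E z"
  shows "wpoly E dvd G \<longleftrightarrow> expand_at_inf z G = 0"
proof
  show "wpoly E dvd G \<Longrightarrow> expand_at_inf z G = 0"
    using expand_at_inf_wpoly[OF z] by (auto simp: expand_at_inf_def elim!: dvdE)
  show "expand_at_inf z G = 0 \<Longrightarrow> wpoly E dvd G"
    using wpoly_dvd_if_vanishes_at_transcendental[of "fls_X / z" E "1 / z" G]
      expand_at_inf_wpoly[OF z] expand_at_inf_const[OF z]
    by (simp add: expand_at_inf_def)
qed

lemma tdeg_ge:
  assumes "j \<le> degree G" "i \<le> degree (coeff G j)"
  shows "i + j \<le> tdeg G"
proof -
  have "degree (coeff G j) \<le> (MAX j \<in> {..degree G}. degree (coeff G j))"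
    using assms(1) by (intro Max_ge) auto
  then show ?thesis using assms unfolding tdeg_def by linarith
qed

lemma eval2_fls_homog:
  "eval2_fls (homog G) x y = (\<Sum>j\<le>degree G. \<Sum>i\<le>degree (coeff G j).
      fls_const (coeff (coeff G j) i) * x ^ i * y ^ (tdeg G - i - j))"
  unfolding homog_def by (simp add: eval2_fls_sum eval2_fls_monom_monom)

lemma eval2_fls_homog_branch:
  assumes z: "z \<noteq> 0"
  shows "eval2_fls (homog G) fls_X z = z ^ tdeg G * expand_at_inf z G"
proof -
  have "z ^ tdeg G * expand_at_inf z G = (\<Sum>j\<le>degree G. \<Sum>i\<le>degree (coeff G j).
      z ^ tdeg G * (fls_const (coeff (coeff G j) i) * (fls_X / z) ^ i * (1 / z) ^ j))"
    unfolding expand_at_inf_def eval2_fls_conv_sum poly_fls_conv_sum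
    by (simp add: sum_distrib_left sum_distrib_right mult.assoc)
  also have "\<dots> = (\<Sum>j\<le>degree G. \<Sum>i\<le>degree (coeff G j).
      fls_const (coeff (coeff G j) i) * fls_X ^ i * z ^ (tdeg G - i - j))"
  proof (intro sum.cong refl)
    fix j i assume "j \<in> {..degree G}" "i \<in> {..degree (coeff G j)}"
    then have "z ^ tdeg G = z ^ (tdeg G - i - j) * z ^ i * z ^ j"
      using tdeg_ge[of j G i] by (simp flip: power_add)
    then show "z ^ tdeg G * (fls_const (coeff (coeff G j) i) * (fls_X / z) ^ i * (1 / z) ^ j) =
      fls_const (coeff (coeff G j) i) * fls_X ^ i * z ^ (tdeg G - i - j)"
      using z by (simp add: field_simps power_divide)
  qed
  finally show ?thesis by (simp add: eval2_fls_homog)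
qed

lemma ord_poly_branch_at_inf:
  assumes br: "branch_at_inf E z" and G: "\<not> wpoly E dvd G"
  shows "ord_poly E Inf G = fls_subdegree (expand_at_inf z G)"
proof -
  interpret smooth_branch "wpoly_inf E" "wpoly_inf_cofactor E" "- (varX ^ 2)" 0 0 z
    by (rule branch_at_inf_smooth_branch[OF br])
  have z0: "z \<noteq> 0" and z3: "fls_subdegree z = 3"
    using branch_at_inf_subdegree[OF br] by auto
  have expand_eq: "expand H = eval2_fls H fls_X z" for H
    by (simp add: expand_def)
  have nz: "expand_at_inf z G \<noteq> 0"
    using wpoly_dvd_iff_branch_at_inf[OF br] G by blast
  \<comment> \<open>the homogenisation is \<open>w\<^sup>d G(u/w, 1/w)\<close>, and \<open>w\<close> has order 3 at infinity\<close>
  have "ordp (wpoly_inf E) 0 0 (homog G) = enat (nat (3 * int (tdeg G) + fls_subdegree (expand_at_inf z G)))"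
    using ordp_eq_subdegree[of "homog G"] eval2_fls_homog_branch[OF z0, of G] z0 nz z3
    by (simp add: expand_eq fls_subdegree_mult fls_subdegree_pow)
  moreover have "ordp (wpoly_inf E) 0 0 varY = enat 3"
    using ordp_eq_subdegree[of varY] z0 z3 by (simp add: expand_eq)
  moreover have "0 \<le> 3 * int (tdeg G) + fls_subdegree (expand_at_inf z G)"
    using expand_regular[of "homog G"] eval2_fls_homog_branch[OF z0, of G] z0 nz z3
    by (simp add: expand_eq ord_ge_iff fls_subdegree_mult fls_subdegree_pow)
  ultimately show ?thesis
    by (simp add: ord_poly_def)
qed

lemma ord_poly_branch_at_inf_const:
  assumes "branch_at_inf E z" "p \<noteq> 0"
  shows "ord_poly E Inf [:p:] = - 2 * int (degree p)"
  using ord_poly_branch_at_inf[OF assms(1) wpoly_not_dvd_const[OF assms(2)]] expand_at_inf_const[OF assms]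
  by simp

lemma fval_branch_at_inf:
  assumes z: "branch_at_inf E z" and h: "\<not> wpoly E dvd h"
    and gh: "wpoly E dvd g \<or> ord_poly E Inf h \<le> ord_poly E Inf g"
  shows "expand_at_inf z g = 0 \<or> fls_subdegree (expand_at_inf z h) \<le> fls_subdegree (expand_at_inf z g)"
    and "fval E Inf g h = expand_at_inf z g $$ fls_subdegree (expand_at_inf z h)
                          / expand_at_inf z h $$ fls_subdegree (expand_at_inf z h)"
  by (rule fval_eq_fls_value_ratio[OF _ _ _ h gh];
      simp add: wpoly_dvd_iff_branch_at_inf[OF z] ord_poly_branch_at_inf[OF z] expand_at_inf_def)+


section \<open>The group of rational points\<close>

lemma frobenius_fixed_field:
  fixes l m q :: nat
  assumes l: "prime l" and m: "m > 0" and q: "q = l ^ m" and char: "of_nat l = (0::'k::field)"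
  shows "field_closed {x::'k. x ^ q = x}" and "finite {x::'k. x ^ q = x}"
proof -
  have "CHAR('k) dvd l" "CHAR('k) \<noteq> 1"
    using char by (simp_all add: of_nat_eq_0_iff_char_dvd)
  then have "CHAR('k) = l"
    using l by (metis prime_nat_iff)
  then have add: "(x + y) ^ q = x ^ q + y ^ q" for x y :: 'k
    using l by (intro freshmans_dream') (simp_all add: q)
  have q1: "q > 1"
    using l m q by (metis one_less_power prime_gt_1_nat)
  have "(-1::'k) ^ q + 1 = 0"
    using add[of "-1" 1] q1 by (simp add: zero_power)
  then have "(-1::'k) ^ q = -1"
    by (simp add: eq_neg_iff_add_eq_0)
  then have minus: "(- x) ^ q = - (x ^ q)" for x :: 'k
    by (simp add: power_minus[of x q])
  show "field_closed {x::'k. x ^ q = x}"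
    unfolding field_closed_def
  proof (intro conjI ballI)
    fix x y :: 'k
    assume x: "x \<in> {x. x ^ q = x}"
    then show "- x \<in> {x. x ^ q = x}" "inverse x \<in> {x. x ^ q = x}"
      by (simp_all add: minus power_inverse)
    assume y: "y \<in> {x. x ^ q = x}"
    with x show "x + y \<in> {x. x ^ q = x}" "x * y \<in> {x. x ^ q = x}"
      by (simp_all add: add power_mult_distrib)
  qed (use q1 in simp_all)
  define P :: "'k poly" where "P = monom 1 q - [:0, 1:]"
  have "coeff P q = 1"
    using q1 by (simp add: P_def coeff_pCons split: nat.split)
  then have "P \<noteq> 0"
    by auto
  moreover have "{x::'k. x ^ q = x} = {x. poly P x = 0}"
    by (simp add: P_def poly_monom)
  ultimately show "finite {x::'k. x ^ q = x}"
    using poly_roots_finite by metis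
qed

lemma eadd_Pt_Pt_eq_Inf_iff:
  "eadd E (Pt x1 y1) (Pt x2 y2) = Inf \<longleftrightarrow> x1 = x2 \<and> y1 + y2 + wa1 E * x2 + wa3 E = 0"
proof (cases "x1 = x2 \<and> y1 + y2 + wa1 E * x2 + wa3 E = 0")
  case True
  then show ?thesis
    unfolding eadd_def ecpt.case if_P[OF True] by simp
next
  case False
  then show ?thesis
    unfolding eadd_def ecpt.case if_not_P[OF False] by (simp add: Let_def case_prod_beta)
qed

lemma integer_mod_double_inj:
  assumes n: "odd n" and uv: "u \<in> {0..<int n}" "v \<in> {0..<int n}"
    and eq: "(u + u) mod int n = (v + v) mod int n"
  shows "u = v"
proof -
  have "int n dvd 2 * (u - v)"
    using eq by (simp add: mod_eq_dvd_iff algebra_simps)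
  moreover have "coprime (int n) 2"
    using n by (simp add: coprime_commute)
  ultimately have "int n dvd u - v"
    using coprime_dvd_mult_right_iff by blast
  moreover have "\<bar>u - v\<bar> < int n"
    using uv by auto
  ultimately show ?thesis
    using dvd_imp_le_int[of "u - v" "int n"] by (cases "u = v") simp_all
qed

lemma iso_Zn_squared_double_inj:
  assumes f: "f \<in> iso G (integer_mod_group n \<times>\<times> integer_mod_group n)" and n: "odd n"
    and xy: "x \<in> carrier G" "y \<in> carrier G" "x \<otimes>\<^bsub>G\<^esub> x = y \<otimes>\<^bsub>G\<^esub> y"
  shows "x = y"
proof -
  have "n \<noteq> 0"
    using odd_pos[OF n] by simp
  then have bij: "bij_betw f (carrier G) ({0..<int n} \<times> {0..<int n})"
    using f by (simp add: iso_def DirProd_def carrier_integer_mod_group)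
  have double: "f (z \<otimes>\<^bsub>G\<^esub> z) = ((fst (f z) + fst (f z)) mod int n, (snd (f z) + snd (f z)) mod int n)"
    if "z \<in> carrier G" for z
    using f that by (simp add: iso_def hom_def DirProd_def split_beta)
  have "f x \<in> {0..<int n} \<times> {0..<int n}" "f y \<in> {0..<int n} \<times> {0..<int n}"
    using bij xy by (auto simp: bij_betw_def)
  then have "f x = f y"
    using double[of x] double[of y] xy(3) xy(1,2) integer_mod_double_inj[OF n]
    by (metis mem_Sigma_iff prod.collapse prod.inject)
  then show ?thesis
    using bij xy by (auto simp: bij_betw_def dest: inj_onD)
qed

lemma egroup_iso_no_2_torsion:
  assumes iso: "egroup E K \<cong> integer_mod_group n \<times>\<times> integer_mod_group n" and n: "odd n"
    and P: "Pt a b \<in> points E K"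
  shows "2 * b + wa1 E * a + wa3 E \<noteq> 0"
proof
  assume "2 * b + wa1 E * a + wa3 E = 0"
  then have "b + b + wa1 E * a + wa3 E = 0"
    by (metis mult_2)
  then have "eadd E (Pt a b) (Pt a b) = eadd E Inf Inf"
    by (simp add: eadd_Pt_Pt_eq_Inf_iff) (simp add: eadd_def)
  moreover obtain f where "f \<in> iso (egroup E K) (integer_mod_group n \<times>\<times> integer_mod_group n)"
    using iso unfolding is_iso_def by blast
  moreover have "Inf \<in> points E K"
    by (simp add: points_def)
  ultimately have "Pt a b = Inf"
    using iso_Zn_squared_double_inj[OF _ n, of f "egroup E K" "Pt a b" Inf] P by (simp add: egroup_def)
  then show False by simp
qed

lemma card_points_iso_Zn_squared:
  assumes "egroup E K \<cong> integer_mod_group n \<times>\<times> integer_mod_group n" "n > 0"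
  shows "card (points E K) = n ^ 2"
proof -
  obtain f where "f \<in> iso (egroup E K) (integer_mod_group n \<times>\<times> integer_mod_group n)"
    using assms(1) unfolding is_iso_def by blast
  then have "bij_betw f (points E K) ({0..<int n} \<times> {0..<int n})"
    using assms(2) by (simp add: iso_def egroup_def DirProd_def carrier_integer_mod_group)
  then show ?thesis
    by (simp add: bij_betw_same_card card_cartesian_product power2_eq_square)
qed


section \<open>Codewords take values in the ground field\<close>

lemma fls_coeffs_in_fls_value_ratio:
  assumes "field_closed K" "fls_coeffs_in K G" "fls_coeffs_in K H"
  shows "G $$ fls_subdegree H / H $$ fls_subdegree H \<in> K"
  using assms by (simp add: fls_coeffs_in_def field_closedD)

lemma fval_affine_in_field:
  assumes K: "field_closed K" and E: "weier_over E K" and ab: "a \<in> K" "b \<in> K"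
    and on: "on_curve E a b" and smooth: "2 * b + wa1 E * a + wa3 E \<noteq> 0"
    and g: "coeffs_in K g" and h: "coeffs_in K h" "\<not> wpoly E dvd h"
    and gh: "wpoly E dvd g \<or> ord_poly E (Pt a b) h \<le> ord_poly E (Pt a b) g"
  shows "fval E (Pt a b) g h \<in> K"
proof -
  obtain z where z: "affine_branch E a b z" "fls_coeffs_in K z"
    using affine_branch_exists[OF K E ab on smooth] .
  have "fls_coeffs_in K (local_x a)" "fls_coeffs_in K (fls_const b + z)"
    using K ab z(2) by (simp_all add: fls_coeffs_in_add fls_coeffs_in_const)
  then show ?thesis
    unfolding fval_affine_branch[OF z(1) h(2) gh]
    by (intro fls_coeffs_in_fls_value_ratio K fls_coeffs_in_eval2_fls g h)
qed

lemma fls_coeffs_in_homog: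
  "field_closed K \<Longrightarrow> coeffs_in K G \<Longrightarrow> fls_coeffs_in K z \<Longrightarrow> fls_coeffs_in K (eval2_fls (homog G) fls_X z)"
  unfolding eval2_fls_homog
  by (intro fls_coeffs_in_sum fls_coeffs_in_mult fls_coeffs_in_power fls_coeffs_in_const fls_coeffs_in_X)
    (auto simp: coeffs_in_def)

lemma fval_Inf_in_field:
  assumes K: "field_closed K" and E: "weier_over E K"
    and g: "coeffs_in K g" and h: "coeffs_in K h" "\<not> wpoly E dvd h"
    and gh: "wpoly E dvd g \<or> ord_poly E Inf h \<le> ord_poly E Inf g"
  shows "fval E Inf g h \<in> K"
proof -
  obtain z where z: "branch_at_inf E z" "fls_coeffs_in K z"
    using branch_at_inf_exists[OF K E] .
  have z0: "z \<noteq> 0"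
    using branch_at_inf_subdegree[OF z(1)] by simp
  have hnz: "expand_at_inf z h \<noteq> 0"
    using wpoly_dvd_iff_branch_at_inf[OF z(1)] h(2) by blast
  \<comment> \<open>the expansions themselves need not have coefficients in \<open>K\<close>, but suitable multiples do\<close>
  define S where "S = z ^ (tdeg g + tdeg h)"
  have S: "S \<noteq> 0"
    using z0 by (simp add: S_def)
  have "S * expand_at_inf z g = z ^ tdeg h * eval2_fls (homog g) fls_X z"
    "S * expand_at_inf z h = z ^ tdeg g * eval2_fls (homog h) fls_X z"
    using eval2_fls_homog_branch[OF z0] by (simp_all add: S_def power_add algebra_simps)
  then have "fls_coeffs_in K (S * expand_at_inf z g)" "fls_coeffs_in K (S * expand_at_inf z h)"
    using K g h z(2) by (simp_all add: fls_coeffs_in_mult fls_coeffs_in_power fls_coeffs_in_homog)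
  then show ?thesis
    using fval_branch_at_inf[OF z(1) h(2) gh] fls_value_ratio_mult[OF S hnz]
      fls_coeffs_in_fls_value_ratio[OF K] by metis
qed


section \<open>Codes from a pair of conjugate points\<close>

lemma on_curve_neg_y: "on_curve E a (- b - wa1 E * a - wa3 E) \<longleftrightarrow> on_curve E a b"
  unfolding on_curve_def by (simp add: algebra_simps power2_eq_square)

lemma on_curve_same_x:
  assumes "on_curve E a b" "on_curve E a b'"
  shows "b' = b \<or> b' = - b - wa1 E * a - wa3 E"
proof -
  have "(b' - b) * (b' + b + wa1 E * a + wa3 E)
      = (b' ^ 2 + wa1 E * a * b' + wa3 E * b') - (b ^ 2 + wa1 E * a * b + wa3 E * b)"
    by (simp add: algebra_simps power2_eq_square)
  also have "\<dots> = 0"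
    using assms unfolding on_curve_def by simp
  finally have "b' - b = 0 \<or> b' + b + wa1 E * a + wa3 E = 0"
    by simp
  then show ?thesis
  proof
    assume sum: "b' + b + wa1 E * a + wa3 E = 0"
    have "b' = (b' + b + wa1 E * a + wa3 E) - b - wa1 E * a - wa3 E"
      by simp
    then show ?thesis
      unfolding sum by simp
  qed simp
qed

lemma ord_poly_Pt_nonneg: "ord_poly E (Pt a b) G \<ge> 0"
  by (simp add: ord_poly_def)

locale conjugate_pair =
  fixes E :: "'k::field weier" and K :: "'k set" and x0 y0 :: 'k
  assumes K: "field_closed K" and finite_K: "finite K" and E: "weier_over E K"
    and no_2_torsion: "\<And>a b. Pt a b \<in> points E K \<Longrightarrow> 2 * b + wa1 E * a + wa3 E \<noteq> 0"
    and Q_on: "on_curve E x0 y0" and x0: "x0 \<in> K" and y0: "y0 \<notin> K"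
    and Q_not_2_torsion: "2 * y0 + wa1 E * x0 + wa3 E \<noteq> 0"
begin

abbreviation pts :: "'k ecpt set" where
  "pts \<equiv> points E K"

\<comment> \<open>\<open>(x0, y1) = -Q\<close>, which is \<open>\<phi>(Q)\<close> in the application\<close>
definition y1 :: 'k where
  "y1 = - y0 - wa1 E * x0 - wa3 E"

definition D :: "nat \<Rightarrow> 'k ecpt \<Rightarrow> int" where
  "D k P = int k * ((if P = Pt x0 y0 then 1 else 0) + (if P = Pt x0 y1 then 1 else 0))"

lemma y0_ne_y1: "y0 \<noteq> y1"
proof -
  have "y0 - y1 = 2 * y0 + wa1 E * x0 + wa3 E"
    by (simp add: y1_def algebra_simps)
  then show ?thesis
    using Q_not_2_torsion by (metis right_minus_eq)
qed

lemma not_2_torsion_y1: "2 * y1 + wa1 E * x0 + wa3 E \<noteq> 0"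
proof -
  have "2 * y1 + wa1 E * x0 + wa3 E = - (2 * y0 + wa1 E * x0 + wa3 E)"
    by (simp add: y1_def algebra_simps)
  then show ?thesis
    using Q_not_2_torsion by (metis neg_equal_0_iff_equal)
qed

lemma on_curve_x0: "on_curve E x0 b \<Longrightarrow> b = y0 \<or> b = y1"
  using on_curve_same_x[OF Q_on] by (auto simp: y1_def)

lemma y1_notin: "y1 \<notin> K"
proof
  assume "y1 \<in> K"
  then have "- y1 - wa1 E * x0 - wa3 E \<in> K"
    using K E x0 by (simp add: field_closedD weier_over_def)
  then show False
    using y0 by (simp add: y1_def)
qed

lemma Pt_x0_notin: "Pt x0 b \<notin> pts"
  using on_curve_x0 y0 y1_notin by (auto simp: points_def)

lemma Pt_in_pts_iff: "Pt a b \<in> pts \<longleftrightarrow> a \<in> K \<and> b \<in> K \<and> on_curve E a b"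
  by (simp add: points_def)

lemma Inf_in_pts: "Inf \<in> pts"
  by (simp add: points_def)

lemma finite_pts: "finite pts"
proof -
  have "pts \<subseteq> insert Inf ((\<lambda>(a, b). Pt a b) ` (K \<times> K))"
    by (auto simp: points_def)
  then show ?thesis
    using finite_K by (meson finite_SigmaI finite_imageI finite_insert finite_subset)
qed

lemma D_pts: "P \<in> pts \<Longrightarrow> D k P = 0"
  using Pt_x0_notin by (auto simp: D_def)

lemma D_nonneg: "D k P \<ge> 0"
  by (simp add: D_def)

lemma finite_ag_code: "finite (ag_code E K pts (D k))"
proof -
  have "fval E P g h \<in> K" if LD: "in_LD E K (D k) g h" and P: "P \<in> pts" for P g h
  proof -
    have gh: "coeffs_in K g" "coeffs_in K h" "\<not> wpoly E dvd h"
      using LD by (auto simp: in_LD_def ratfun_def)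
    have "P \<in> points E UNIV"
      using P by (auto simp: points_def)
    then have "wpoly E dvd g \<or> ord_poly E P h \<le> ord_poly E P g"
      using LD D_pts[OF P] by (auto simp: in_LD_def ord_fun_def)
    then show ?thesis
      using P no_2_torsion
      by (cases P) (auto intro!: fval_Inf_in_field fval_affine_in_field K E gh simp: Pt_in_pts_iff)
  qed
  then have "ag_code E K pts (D k) \<subseteq> {c. \<forall>P. (P \<in> pts \<longrightarrow> c P \<in> K) \<and> (P \<notin> pts \<longrightarrow> c P = 0)}"
    by (auto simp: ag_code_def)
  then show ?thesis
    using finite_set_of_finite_funs[OF finite_pts finite_K] finite_subset by blast
qed

definition fibre :: "'k \<Rightarrow> 'k ecpt set" where
  "fibre a = {P \<in> pts. \<exists>b. P = Pt a b}"

definition xcoords :: "'k set" where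
  "xcoords = {a. \<exists>b. Pt a b \<in> pts}"

lemma card_fibre:
  assumes "a \<in> xcoords"
  shows "card (fibre a) = 2"
proof -
  obtain b where b: "Pt a b \<in> pts"
    using assms by (auto simp: xcoords_def)
  define b' where "b' = - b - wa1 E * a - wa3 E"
  have ab: "a \<in> K" "b \<in> K" "on_curve E a b"
    using b by (auto simp: Pt_in_pts_iff)
  then have b': "b' \<in> K" "on_curve E a b'"
    using K E on_curve_neg_y[of E a b] by (auto simp: b'_def weier_over_def field_closedD)
  have "b - b' = 2 * b + wa1 E * a + wa3 E"
    by (simp add: b'_def algebra_simps)
  then have "b \<noteq> b'"
    using no_2_torsion[OF b] by (metis right_minus_eq)
  moreover have "fibre a = {Pt a b, Pt a b'}"
  proof (intro equalityI subsetI)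
    fix P assume "P \<in> fibre a"
    then obtain c where "P = Pt a c" "on_curve E a c"
      by (auto simp: fibre_def Pt_in_pts_iff)
    then show "P \<in> {Pt a b, Pt a b'}"
      using on_curve_same_x[OF ab(3)] by (auto simp: b'_def)
  qed (use ab b' in \<open>auto simp: fibre_def Pt_in_pts_iff\<close>)
  ultimately show ?thesis by simp
qed

lemma pts_minus_Inf: "pts - {Inf} = (\<Union>a\<in>xcoords. fibre a)"
proof -
  have "P \<in> pts - {Inf} \<longleftrightarrow> P \<in> (\<Union>a\<in>xcoords. fibre a)" for P
    by (cases P) (auto simp: xcoords_def fibre_def)
  then show ?thesis by blast
qed

lemma finite_xcoords: "finite xcoords"
  using finite_K finite_subset by (fastforce simp: xcoords_def Pt_in_pts_iff)

lemma card_Union_fibre: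
  assumes "A \<subseteq> xcoords"
  shows "card (\<Union>a\<in>A. fibre a) = 2 * card A"
proof -
  have "finite A"
    using assms finite_xcoords finite_subset by blast
  then have "card (\<Union>a\<in>A. fibre a) = (\<Sum>a\<in>A. card (fibre a))"
    by (intro card_UN_disjoint) (auto simp: fibre_def finite_pts)
  also have "\<dots> = 2 * card A"
    using assms card_fibre by (simp add: subset_iff)
  finally show ?thesis .
qed

lemma card_pts: "card pts = 2 * card xcoords + 1"
  using card_Union_fibre[of xcoords] pts_minus_Inf Inf_in_pts finite_pts
  by (metis card_Diff_singleton card.remove Suc_eq_plus1 order_refl)

definition num :: "'k set \<Rightarrow> 'k bipoly" where
  "num A = [:\<Prod>a\<in>A. [:- a, 1:]:]"

definition den :: "nat \<Rightarrow> 'k bipoly" where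
  "den n = [:[:- x0, 1:] ^ n:]"

lemma ord_poly_Inf_num_den:
  assumes "finite A"
  shows "ord_poly E Inf (num A) = - 2 * int (card A)" "ord_poly E Inf (den n) = - 2 * int n"
proof -
  obtain z where z: "branch_at_inf E z"
    using branch_at_inf_exists[OF K E] by blast
  show "ord_poly E Inf (num A) = - 2 * int (card A)" "ord_poly E Inf (den n) = - 2 * int n"
    using ord_poly_branch_at_inf_const[OF z] assms
    by (simp_all add: num_def den_def degree_prod_eq_sum_degree degree_power_eq)
qed

lemma ord_poly_Pt_den:
  assumes on: "on_curve E a b"
  shows "ord_poly E (Pt a b) (den n) = (if a = x0 then int n else 0)"
proof (cases "a = x0")
  case True
  then have "2 * b + wa1 E * a + wa3 E \<noteq> 0"
    using on_curve_x0 on Q_not_2_torsion not_2_torsion_y1 by blast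
  then obtain z where "affine_branch E a b z"
    using affine_branch_exists[OF field_closed_UNIV, of E a b] on by (auto simp: weier_over_def)
  then show ?thesis
    using ord_poly_affine_branch_const[of E a b z "[:- x0, 1:] ^ n"] True
    by (simp add: den_def order_power_n_n)
next
  case False
  then have "ordp (wpoly E) a b (den n) = 0"
    using eval2_wpoly[OF on] by (intro ordp_eq_0_if_eval2_nonzero) (simp_all add: den_def)
  with False show ?thesis
    by (simp add: ord_poly_def zero_enat_def)
qed

lemma in_LD_num_den:
  assumes A: "finite A" "A \<subseteq> K" and n: "card A \<le> n" "n \<le> k"
  shows "in_LD E K (D k) (num A) (den n)"
  unfolding in_LD_def ratfun_def
proof (intro conjI disjI2 ballI)
  show "coeffs_in K (num A)" "coeffs_in K (den n)"
    using K A x0 unfolding num_def den_def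
    by (auto intro!: coeffs_in_const poly_coeffs_in_prod poly_coeffs_in_power poly_coeffs_in_linear)
  show "\<not> wpoly E dvd den n"
    by (simp add: den_def wpoly_not_dvd_const)
  fix P :: "'k ecpt" assume P: "P \<in> points E UNIV"
  show "- D k P \<le> ord_fun E P (num A) (den n)"
  proof (cases P)
    case Inf
    then show ?thesis
      using ord_poly_Inf_num_den[OF A(1)] n by (simp add: ord_fun_def D_def)
  next
    case (Pt a b)
    then have "on_curve E a b"
      using P by (simp add: points_def)
    moreover have "D k (Pt x0 b) = int k" if "on_curve E x0 b"
      using on_curve_x0[OF that] y0_ne_y1 by (auto simp: D_def)
    ultimately show ?thesis
      using ord_poly_Pt_den ord_poly_Pt_nonneg[of E a b "num A"] D_nonneg[of k P] n Pt
      by (auto simp: ord_fun_def)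
  qed
qed

lemma fval_Pt_num_den:
  assumes P: "Pt a b \<in> pts" and A: "finite A"
  shows "fval E (Pt a b) (num A) (den n) \<noteq> 0 \<longleftrightarrow> a \<notin> A"
proof -
  have ab: "a \<in> K" "b \<in> K" and on: "on_curve E a b" and a: "a \<noteq> x0"
    using P Pt_x0_notin by (auto simp: Pt_in_pts_iff)
  obtain z where z: "affine_branch E a b z"
    using affine_branch_exists[OF K E ab on no_2_torsion[OF P]] by blast
  have "ord_poly E (Pt a b) (den n) \<le> ord_poly E (Pt a b) (num A)"
    using ord_poly_Pt_den[OF on] ord_poly_Pt_nonneg a by simp
  then have "fval E (Pt a b) (num A) (den n)
      = poly_fls (\<Prod>a\<in>A. [:- a, 1:]) (local_x a) $$ fls_subdegree (poly_fls ([:- x0, 1:] ^ n) (local_x a))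
        / poly_fls ([:- x0, 1:] ^ n) (local_x a) $$ fls_subdegree (poly_fls ([:- x0, 1:] ^ n) (local_x a))"
    using fval_affine_branch[OF z] by (simp add: num_def den_def wpoly_not_dvd_const)
  also have "\<dots> = poly (\<Prod>a\<in>A. [:- a, 1:]) a / poly ([:- x0, 1:] ^ n) a"
  proof -
    have "order a ([:- x0, 1:] ^ n) = 0"
      using a by (intro order_0I) simp
    then have "fls_subdegree (poly_fls ([:- x0, 1:] ^ n) (local_x a)) = 0"
      using poly_fls_local_x(2)[of "[:- x0, 1:] ^ n" a] by (simp only:) simp
    then show ?thesis
      by (simp only: poly_fls_nth_0[OF fls_regular_local_x]) simp
  qed
  finally show ?thesis
    using a A by (simp add: poly_prod)
qed

lemma fval_Inf_num_den:
  assumes A: "finite A" and n: "card A \<le> n"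
  shows "fval E Inf (num A) (den n) \<noteq> 0 \<longleftrightarrow> n = card A"
proof -
  obtain z where z: "branch_at_inf E z"
    using branch_at_inf_exists[OF K E] by blast
  have gh: "wpoly E dvd num A \<or> ord_poly E Inf (den n) \<le> ord_poly E Inf (num A)"
    using ord_poly_Inf_num_den[OF A] n by simp
  have g: "expand_at_inf z (num A) \<noteq> 0" "fls_subdegree (expand_at_inf z (num A)) = - 2 * int (card A)"
    using expand_at_inf_const[OF z, of "\<Prod>a\<in>A. [:- a, 1:]"] A
    by (simp_all add: num_def degree_prod_eq_sum_degree)
  have h: "expand_at_inf z (den n) \<noteq> 0" "fls_subdegree (expand_at_inf z (den n)) = - 2 * int n"
    using expand_at_inf_const[OF z, of "[:- x0, 1:] ^ n"] by (simp_all add: den_def degree_power_eq)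
  have "\<not> wpoly E dvd den n"
    by (simp add: den_def wpoly_not_dvd_const)
  note fval = fval_branch_at_inf(2)[OF z this gh]
  show ?thesis
  proof (cases "n = card A")
    case True
    then have "expand_at_inf z (num A) $$ fls_subdegree (expand_at_inf z (den n)) \<noteq> 0"
      using g h by (metis nth_fls_subdegree_nonzero)
    then show ?thesis
      using fval h(1) True by simp
  next
    case False
    then have "expand_at_inf z (num A) $$ fls_subdegree (expand_at_inf z (den n)) = 0"
      using g h n by simp
    then show ?thesis
      using fval False by simp
  qed
qed

lemma hweight_num_den:
  assumes A: "A \<subseteq> xcoords" and n: "card A \<le> n" "n \<le> card A + 1"
  shows "hweight pts (\<lambda>P. if P \<in> pts then fval E P (num A) (den n) else 0) = card pts - (card A + n)"
proof -
  define c where "c = (\<lambda>P. if P \<in> pts then fval E P (num A) (den n) else 0)"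
  define U where "U = (\<Union>a\<in>A. fibre a)"
  have fin: "finite A"
    using A finite_xcoords finite_subset by blast
  have U: "U \<subseteq> pts - {Inf}" "card U = 2 * card A"
    using A pts_minus_Inf card_Union_fibre[OF A] by (auto simp: U_def)
  have "P \<in> {P \<in> pts. c P \<noteq> 0} \<longleftrightarrow> P \<in> (pts - {Inf} - U) \<union> (if n = card A then {Inf} else {})" for P
  proof (cases P)
    case Inf
    moreover have "Inf \<notin> U"
      by (auto simp: U_def fibre_def)
    ultimately show ?thesis
      using fval_Inf_num_den[OF fin n(1)] Inf_in_pts by (simp add: c_def)
  next
    case (Pt a b)
    moreover have "Pt a b \<in> U \<longleftrightarrow> a \<in> A \<and> Pt a b \<in> pts"
      by (auto simp: U_def fibre_def)
    ultimately show ?thesis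
      using fval_Pt_num_den[OF _ fin, of a b] by (auto simp: c_def)
  qed
  then have supp: "{P \<in> pts. c P \<noteq> 0} = (pts - {Inf} - U) \<union> (if n = card A then {Inf} else {})"
    by blast
  have "card (pts - {Inf} - U) = card pts - 1 - 2 * card A"
    using U finite_pts Inf_in_pts by (simp add: card_Diff_subset finite_subset)
  moreover have "2 * card A < card pts"
    using card_pts card_mono[OF finite_xcoords A] by linarith
  ultimately show ?thesis
    using n finite_pts unfolding c_def[symmetric] hweight_def supp
    by (cases "n = card A") simp_all
qed

lemma exists_codeword_of_weight:
  assumes j: "j \<le> 2 * k" and k: "2 * k < card pts"
  shows "\<exists>c \<in> ag_code E K pts (D k). hweight pts c = card pts - j"
proof -
  define m where "m = j div 2"
  define n where "n = j - m"
  have mn: "m \<le> n" "n \<le> m + 1" "n \<le> k" "m + n = j" "2 * m \<le> j"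
    using j unfolding m_def n_def by presburger+
  then have "m \<le> card xcoords"
    using j k card_pts by linarith
  then obtain A where A: "A \<subseteq> xcoords" "card A = m"
    by (meson obtain_subset_with_card_n)
  have "finite A" "A \<subseteq> K"
    using A finite_xcoords finite_subset by (auto simp: xcoords_def Pt_in_pts_iff)
  then have "(\<lambda>P. if P \<in> pts then fval E P (num A) (den n) else 0) \<in> ag_code E K pts (D k)"
    using in_LD_num_den[of A n k] A mn unfolding ag_code_def by auto
  moreover have "hweight pts (\<lambda>P. if P \<in> pts then fval E P (num A) (den n) else 0) = card pts - j"
    using hweight_num_den[OF A(1)] A mn by simp
  ultimately show ?thesis
    by blast
qed

lemma weight_count_pos:
  assumes k: "2 * k < card pts" and w: "card pts - 2 * k \<le> w" "w \<le> card pts"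
  shows "weight_count (ag_code E K pts (D k)) pts w > 0"
proof -
  have "\<exists>c \<in> ag_code E K pts (D k). hweight pts c = card pts - (card pts - w)"
    using k w by (intro exists_codeword_of_weight) auto
  then obtain c where "c \<in> ag_code E K pts (D k)" "hweight pts c = w"
    using w by auto
  then show ?thesis
    using finite_ag_code by (auto simp: weight_count_def card_gt_0_iff)
qed

end

lemma conjugate_pair_of_frobenius:
  assumes K: "K = {x. x ^ q = x}" "field_closed K" "finite K" and E: "weier_over E K"
    and no_2_torsion: "\<And>a b. Pt a b \<in> points E K \<Longrightarrow> 2 * b + wa1 E * a + wa3 E \<noteq> 0"
    and Q: "Q \<in> points E L - points E K" and QQ: "eadd E Q (frob q Q) = Inf"
  obtains x0 y0 where "conjugate_pair E K x0 y0" "Q = Pt x0 y0"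
    "frob q Q = Pt x0 (- y0 - wa1 E * x0 - wa3 E)"
proof -
  obtain x0 y0 where Q: "Q = Pt x0 y0" "on_curve E x0 y0" "\<not> (x0 \<in> K \<and> y0 \<in> K)"
    using Q by (auto simp: points_def)
  have x0q: "x0 ^ q = x0" and y0q: "y0 ^ q = - y0 - wa1 E * x0 - wa3 E"
    using QQ by (auto simp: Q frob_def eadd_Pt_Pt_eq_Inf_iff algebra_simps eq_neg_iff_add_eq_0)
  then have "x0 \<in> K" "y0 \<notin> K"
    using Q(3) by (auto simp: K)
  moreover from this have "2 * y0 + wa1 E * x0 + wa3 E \<noteq> 0"
    using y0q by (auto simp: K algebra_simps mult_2 eq_neg_iff_add_eq_0)
  ultimately have "conjugate_pair E K x0 y0"
    using K E Q(2) no_2_torsion by unfold_locales auto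
  moreover have "frob q Q = Pt x0 (- y0 - wa1 E * x0 - wa3 E)"
    using x0q y0q by (simp add: Q frob_def)
  ultimately show ?thesis
    using that Q(1) by blast
qed


theorem mainTheorem7:
  fixes E :: "'k::field weier" and q p k :: nat and Q :: "'k ecpt"
  assumes "alg_closed_type TYPE('k)"
    and "prime l" and "m > 0" and "q = l ^ m" and "of_nat l = (0::'k)"
    and "q \<ge> 7"
    and "prime p" and "odd p"
    and "{wa1 E, wa2 E, wa3 E, wa4 E, wa6 E} \<subseteq> {x. x ^ q = x}"
    and "nonsingular E"
    and "egroup E {x. x ^ q = x} \<cong> integer_mod_group p \<times>\<times> integer_mod_group p"
    and "Q \<in> points E {x. x ^ (q^2) = x} - points E {x. x ^ q = x}"
    and "eadd E Q (frob q Q) = Inf"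
    and "p dvd k" and "0 < k" and "2 * k < p^2"
  shows "\<forall>w. p^2 - 2 * k \<le> w \<and> w \<le> p^2 \<longrightarrow>
           weight_count
             (ag_code E {x. x ^ q = x} (points E {x. x ^ q = x})
                (\<lambda>P. int k * ((if P = Q then 1 else 0) + (if P = frob q Q then 1 else 0))))
             (points E {x. x ^ q = x}) w > 0"
proof -
  define K where "K = {x::'k. x ^ q = x}"
  have K: "field_closed K" "finite K"
    using frobenius_fixed_field[OF assms(2-5)] by (simp_all add: K_def)
  have E: "weier_over E K"
    using assms(9) by (simp add: weier_over_def K_def)
  obtain x0 y0 where pair: "conjugate_pair E K x0 y0" and Q: "Q = Pt x0 y0"
      "frob q Q = Pt x0 (- y0 - wa1 E * x0 - wa3 E)"
    using conjugate_pair_of_frobenius[OF K_def K E egroup_iso_no_2_torsion[OF assms(11,8), folded K_def]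
        assms(12)[folded K_def] assms(13)] .
  interpret conjugate_pair E K x0 y0
    by (fact pair)
  have "(\<lambda>P. int k * ((if P = Q then 1 else 0) + (if P = frob q Q then 1 else 0))) = D k"
    unfolding Q(2) by (intro ext) (simp add: Q(1) D_def y1_def)
  moreover have "card pts = p ^ 2"
    using card_points_iso_Zn_squared[OF assms(11)] assms(7) by (simp add: K_def prime_gt_0_nat)
  ultimately show ?thesis
    using weight_count_pos assms(16) by (simp add: K_def)
qed
end
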